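(* Let $G=(V,E)$ be a finite simple graph with $V=\{1,\dots,n\}$, $E=\{e_1,\dots,e_m\}$ and $n\times m$ incidence matrix $A$, and assume $G$ is surjective (every connected component of $G$ is non-bipartite). Let $\lambda\in\mathbb{R}_{>0}^n$. The following are equivalent: (i) the matching problem $(G,\lambda)$ is stabilizable; (ii) for every independent set $\mathcal{I}$ of $G$, $\sum_{i\in\mathcal{I}}\lambda_i<\sum_{i\in V(\mathcal{I})}\lambda_i$, where $V(\mathcal{I})=\bigcup_{i\in\mathcal{I}}V_i$; (iii) the equation $A\mu=\lambda$ admits a solution $\mu\in\mathbb{R}_{>0}^m$ (all coordinates strictly positive).
   Context: Graph notation: $V_i$ is the set of neighbours of node $i$, $E_i$ the set of edges incident to $i$; the incidence matrix $A$ has $a_{i,k}=1$ if node $i$ is an endpoint of $e_k$ and $0$ otherwise. An independent set is a non-empty set of pairwise non-adjacent nodes. Matching model: items of class $i\in V$ arrive according to independent Poisson processes of rate $\lambda_i$ (equivalently, the classes $I_0,I_1,\dots$ of successive arriving items are i.i.d. with $P(I_t=i)=\lambda_i/\sum_j\lambda_j$); a class-$i$ item can be matched with a class-$j$ item iff $\{i,j\}\in E$; matched items leave immediately, unmatched items wait. A matching policy consists of a countably infinite state space $\mathcal{S}$, a map $|\cdot|:\mathcal{S}\to\mathbb{N}^n$ giving the number of unmatched items of each class, with a unique state $\varnothing$ such that $|\varnothing|=0$, and a function $\Phi:\mathcal{S}\times V\times(V\cup\{\bot\})\times\mathcal{S}\to[0,1]$, where $\Phi(s,i,j,s')$ is the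 probability that an arriving class-$i$ item finding state $s$ is matched with a class-$j$ item ($j=\bot$: left unmatched) and the new state is $s'$; it is required that $\Phi(s,i,j,s')>0$ only if $j\in\{j'\in V_i:|s|_{j'}\ge1\}\cup\{\bot\}$ and $|s'|=|s|+\mathbf{1}_i$ if $j=\bot$, $|s'|=|s|-\mathbf{1}_j$ otherwise ($\mathbf{1}_i$ the $i$-th unit vector), and that the Markov chain $(S_t)$ of states, started from $S_0=\varnothing$, is irreducible on $\mathcal{S}$. The model is stable if $(S_t)$ is positive recurrent; the problem $(G,\lambda)$ is stabilizable if some policy makes it stable. *)

theory Defs
  imports "HOL-Analysis.Analysis"
begin

definition simple_graph :: "nat \<Rightarrow> nat set set \<Rightarrow> bool" where
  "simple_graph n E \<longleftrightarrow> (\<forall>e\<in>E. \<exists>i j. e = {i, j} \<and> i \<noteq> j \<and> i \<in> {1..n} \<and> j \<in> {1..n})"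

definition nbrs :: "nat set set \<Rightarrow> nat \<Rightarrow> nat set" where
  "nbrs E i = {j. {i, j} \<in> E}"

definition adj :: "nat set set \<Rightarrow> nat \<Rightarrow> nat \<Rightarrow> bool" where
  "adj E i j \<longleftrightarrow> {i, j} \<in> E"

definition component :: "nat set set \<Rightarrow> nat \<Rightarrow> nat set" where
  "component E i = {j. (adj E)\<^sup>*\<^sup>* i j}"

definition bipartite_on :: "nat set set \<Rightarrow> nat set \<Rightarrow> bool" where
  "bipartite_on E C \<longleftrightarrow> (\<exists>c :: nat \<Rightarrow> bool. \<forall>x\<in>C. \<forall>y\<in>C. {x, y} \<in> E \<longrightarrow> c x \<noteq> c y)"

definition surjective_graph :: "nat \<Rightarrow> nat set set \<Rightarrow> bool" where
  "surjective_graph n E \<longleftrightarrow> (\<forall>i\<in>{1..n}. \<not> bipartite_on E (component E i))"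

definition independent_set :: "nat \<Rightarrow> nat set set \<Rightarrow> nat set \<Rightarrow> bool" where
  "independent_set n E I \<longleftrightarrow> I \<noteq> {} \<and> I \<subseteq> {1..n} \<and> (\<forall>i\<in>I. \<forall>j\<in>I. {i, j} \<notin> E)"

definition incidence :: "nat \<Rightarrow> nat set \<Rightarrow> real" where
  "incidence i e = (if i \<in> e then 1 else 0)"

text \<open>taboo P s k x: probability, starting from s, of being at x at time k
  without having visited s at times 1..k.\<close>
fun taboo :: "(nat \<Rightarrow> nat \<Rightarrow> real) \<Rightarrow> nat \<Rightarrow> nat \<Rightarrow> nat \<Rightarrow> real" where
  "taboo P s 0 x = (if x = s then 1 else 0)"
| "taboo P s (Suc k) y = (if y = s then 0 else (\<Sum>\<^sub>\<infinity>x. taboo P s k x * P x y))"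

fun first_return :: "(nat \<Rightarrow> nat \<Rightarrow> real) \<Rightarrow> nat \<Rightarrow> nat \<Rightarrow> real" where
  "first_return P s 0 = 0"
| "first_return P s (Suc k) = (\<Sum>\<^sub>\<infinity>x. taboo P s k x * P x s)"

definition positive_recurrent_state :: "(nat \<Rightarrow> nat \<Rightarrow> real) \<Rightarrow> nat \<Rightarrow> bool" where
  "positive_recurrent_state P s \<longleftrightarrow>
     (first_return P s has_sum 1) UNIV \<and> (\<lambda>k. real k * first_return P s k) summable_on UNIV"

definition irreducible :: "(nat \<Rightarrow> nat \<Rightarrow> real) \<Rightarrow> bool" where
  "irreducible P \<longleftrightarrow> (\<forall>s s'. (\<lambda>x y. P x y > 0)\<^sup>*\<^sup>* s s')"

definition positive_recurrent :: "(nat \<Rightarrow> nat \<Rightarrow> real) \<Rightarrow> bool" where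
  "positive_recurrent P \<longleftrightarrow> (\<forall>s. positive_recurrent_state P s)"

text \<open>State space: nat (countably infinite). sz s k = number of unmatched class-k
  items in state s. Phi s i j s': probability that an arriving class-i item finding
  state s is matched with a class-j item (j = Some j) or left unmatched (j = None),
  the new state being s'.\<close>

definition matching_policy ::
  "nat \<Rightarrow> nat set set \<Rightarrow> (nat \<Rightarrow> nat \<Rightarrow> nat) \<Rightarrow> nat \<Rightarrow>
   (nat \<Rightarrow> nat \<Rightarrow> nat option \<Rightarrow> nat \<Rightarrow> real) \<Rightarrow> bool" where
  "matching_policy n E sz s0 Phi \<longleftrightarrow>
     (\<forall>s k. k \<notin> {1..n} \<longrightarrow> sz s k = 0) \<and>
     (\<forall>s. sz s = (\<lambda>_. 0) \<longleftrightarrow> s = s0) \<and>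
     (\<forall>s i j s'. Phi s i j s' \<ge> 0) \<and>
     (\<forall>s i. i \<in> {1..n} \<longrightarrow>
        ((\<lambda>s'. Phi s i None s' + (\<Sum>j\<in>{1..n}. Phi s i (Some j) s')) has_sum 1) UNIV) \<and>
     (\<forall>s i j s'. i \<in> {1..n} \<longrightarrow> Phi s i j s' > 0 \<longrightarrow>
        (j = None \<and> sz s' = (sz s)(i := sz s i + 1)) \<or>
        (\<exists>j'. j = Some j' \<and> j' \<in> nbrs E i \<and> sz s j' \<ge> 1 \<and> sz s' = (sz s)(j' := sz s j' - 1)))"

text \<open>Transition matrix of the state chain: classes arrive i.i.d. with
  P(I = i) = lam i / (sum of lam).\<close>
definition policy_chain ::
  "nat \<Rightarrow> (nat \<Rightarrow> real) \<Rightarrow> (nat \<Rightarrow> nat \<Rightarrow> nat option \<Rightarrow> nat \<Rightarrow> real) \<Rightarrow> nat \<Rightarrow> nat \<Rightarrow> real" where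
  "policy_chain n lam Phi s s' =
     (\<Sum>i\<in>{1..n}. (lam i / (\<Sum>k\<in>{1..n}. lam k)) *
        (Phi s i None s' + (\<Sum>j\<in>{1..n}. Phi s i (Some j) s')))"

definition stabilizable :: "nat \<Rightarrow> nat set set \<Rightarrow> (nat \<Rightarrow> real) \<Rightarrow> bool" where
  "stabilizable n E lam \<longleftrightarrow>
     (\<exists>sz s0 Phi. matching_policy n E sz s0 Phi \<and>
        irreducible (policy_chain n lam Phi) \<and>
        positive_recurrent (policy_chain n lam Phi))"

end

theory Submission
  imports Defs
begin

text \<open>
  Edge rates imply the independent-set condition: writing \<open>\<lambda> = A \<mu>\<close>, every edge contributes
  \<open>\<mu> e\<close> at most once to \<open>\<lambda>(I)\<close> and at least once to \<open>\<lambda>(V(I))\<close>, and equality for all edges would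
  make the component of \<open>I\<close> bipartite. Conversely, after reserving a small rate on every edge the
  remaining vertex rates satisfy Hall's condition for the neighbourhood relation, so the
  supply-demand theorem yields a transport plan, which symmetrises to edge rates.

  No policy is stable if \<open>\<lambda>(I) \<ge> \<lambda>(V(I))\<close>: the number of waiting items of \<open>I\<close> minus those of
  \<open>V(I)\<close> then increases in expectation under any policy, and a positive recurrent chain admits no
  nonnegative submartingale that vanishes at the empty state and is bounded by the total number of
  waiting items, because \<open>k\<close> times the probability that the return time exceeds \<open>k\<close> tends to \<open>0\<close>.
  If the condition holds with a margin \<open>\<delta>\<close>, the policy that matches with the longest compatible
  queue is stable by Foster's criterion for \<open>\<Sum>k. x k ^ 2\<close>: the level sets \<open>{k. t \<le> x k}\<close> of a
  reachable state are independent, and each of them gains the margin \<open>\<delta>\<close> in the drift.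
\<close>
lemma has_sum_diff:
  fixes f g :: "'a \<Rightarrow> real"
  assumes "(f has_sum a) A" "(g has_sum b) A"
  shows "((\<lambda>x. f x - g x) has_sum (a - b)) A"
  using has_sum_add[OF assms(1) has_sum_uminus[where f=g and a="-b" and A=A, THEN iffD2]] assms(2)
  by simp

lemma has_sum_sum:
  fixes f :: "'i \<Rightarrow> 'a \<Rightarrow> real"
  assumes "finite I" "\<And>i. i \<in> I \<Longrightarrow> (f i has_sum a i) A"
  shows "((\<lambda>x. \<Sum>i\<in>I. f i x) has_sum (\<Sum>i\<in>I. a i)) A"
  using assms by (induction I rule: finite_induct) (simp_all add: has_sum_add)

lemma has_sum_indicator_point: "((\<lambda>y. if y = z then c else 0) has_sum (c::real)) UNIV"
  by (rule has_sum_finite_neutralI[of "{z}"]) auto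

lemma has_sum_of_bool_eq_mult: "((\<lambda>y. of_bool (y = z) * f y) has_sum (f z :: real)) UNIV"
  by (rule has_sum_finite_neutralI[of "{z}"]) auto

lemma sum_fun_upd_add:
  fixes g :: "'a \<Rightarrow> 'b::comm_monoid_add"
  assumes "finite A" "j \<in> A"
  shows "sum (g(j := v)) A + g j = sum g A + v"
proof -
  have "sum (g(j := v)) (A - {j}) = sum g (A - {j})"
    by (rule sum.cong) auto
  then show ?thesis
    using sum.remove[OF assms, of "g(j := v)"] sum.remove[OF assms, of g] by (simp add: ac_simps)
qed

lemma sum_fun_upd_real:
  fixes g :: "'a \<Rightarrow> real"
  assumes "finite A"
  shows "sum (g(j := v)) A = sum g A + (if j \<in> A then v - g j else 0)"
proof (cases "j \<in> A")
  case True
  then show ?thesis using sum_fun_upd_add[OF assms True, of g v] by simp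
next
  case False
  then show ?thesis by (auto intro!: sum.cong)
qed

section \<open>Killed chains and return times\<close>

definition stochastic_matrix :: "(nat \<Rightarrow> nat \<Rightarrow> real) \<Rightarrow> bool" where
  "stochastic_matrix P \<longleftrightarrow> (\<forall>x y. 0 \<le> P x y) \<and> (\<forall>x. (P x has_sum 1) UNIV)"

lemma
  assumes "stochastic_matrix P"
  shows stochastic_matrix_nonneg: "0 \<le> P x y" and stochastic_matrix_has_sum: "(P x has_sum 1) UNIV"
  using assms by (auto simp: stochastic_matrix_def)

lemma stochastic_matrix_le_1:
  assumes "stochastic_matrix P"
  shows "P x y \<le> 1"
  by (rule has_sum_mono[OF has_sum_indicator_point stochastic_matrix_has_sum[OF assms]])
    (auto simp: stochastic_matrix_nonneg[OF assms])

lemma summable_on_mult_stochastic: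
  assumes "stochastic_matrix P" "u summable_on UNIV" "\<And>x. 0 \<le> u x"
  shows "(\<lambda>x. u x * P x y) summable_on UNIV"
proof (rule summable_on_comparison_test[OF assms(2)])
  fix x
  show "u x * P x y \<le> u x"
    using mult_left_le[OF stochastic_matrix_le_1[OF assms(1)] assms(3)] by simp
  show "0 \<le> u x * P x y"
    using assms(3) stochastic_matrix_nonneg[OF assms(1)] by simp
qed

lemma has_sum_kernel_assoc:
  fixes u h Ph :: "nat \<Rightarrow> real" and P :: "nat \<Rightarrow> nat \<Rightarrow> real"
  assumes P: "\<And>x y. 0 \<le> P x y" and u: "\<And>x. 0 \<le> u x" and h: "\<And>y. 0 \<le> h y"
    and Ph: "\<And>x. ((\<lambda>y. P x y * h y) has_sum Ph x) UNIV"
    and S: "((\<lambda>x. u x * Ph x) has_sum S) UNIV"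
  shows "((\<lambda>y. \<Sum>\<^sub>\<infinity>x. u x * P x y * h y) has_sum S) UNIV"
proof -
  define f where "f = (\<lambda>(x::nat, y::nat). u x * P x y * h y)"
  have rows: "((\<lambda>y. f (x, y)) has_sum u x * Ph x) UNIV" for x
    using has_sum_cmult_right[OF Ph[of x], of "u x"] by (simp add: f_def mult.assoc)
  have "f summable_on UNIV \<times> UNIV"
    by (rule summable_on_SigmaI[OF rows])
      (use S in \<open>auto simp: f_def summable_on_def intro!: mult_nonneg_nonneg P u h\<close>)
  then have "(f has_sum S) (UNIV \<times> UNIV)"
    by (rule has_sum_SigmaI[OF rows S])
  then have swapped: "((\<lambda>(y, x). f (x, y)) has_sum S) (UNIV \<times> UNIV)"
    using has_sum_swap[where f=f and S=S and A=UNIV and B=UNIV] by (simp add: case_prod_beta)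
  then have "(\<lambda>(y, x). f (x, y)) summable_on UNIV \<times> UNIV"
    by (auto simp: summable_on_def)
  from summable_on_SigmaD1[OF this]
  have "(\<lambda>x. u x * P x y * h y) summable_on UNIV" for y
    by (simp add: f_def)
  then show ?thesis
    by (intro has_sum_Sigma'[OF swapped]) (auto simp: f_def)
qed

text \<open>One step of the chain killed on entering \<open>s\<close>, acting on a sub-probability vector \<open>u\<close>.\<close>

definition taboo_step :: "(nat \<Rightarrow> nat \<Rightarrow> real) \<Rightarrow> nat \<Rightarrow> (nat \<Rightarrow> real) \<Rightarrow> nat \<Rightarrow> real" where
  "taboo_step P s u y = (if y = s then 0 else (\<Sum>\<^sub>\<infinity>x. u x * P x y))"

lemma taboo_Suc: "taboo P s (Suc k) = taboo_step P s (taboo P s k)"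
  by (auto simp: taboo_step_def)

lemma taboo_add: "taboo P s (k + r) = (taboo_step P s ^^ r) (taboo P s k)"
  by (induction r) (auto simp: taboo_Suc)

lemma taboo_step_nonneg:
  assumes "stochastic_matrix P" "\<And>x. 0 \<le> u x"
  shows "0 \<le> taboo_step P s u y"
  using assms by (auto simp: taboo_step_def stochastic_matrix_nonneg intro!: infsum_nonneg)

lemma taboo_step_ge:
  assumes P: "stochastic_matrix P" and u: "\<And>x. 0 \<le> u x" "u summable_on UNIV" and "y \<noteq> s"
  shows "u x * P x y \<le> taboo_step P s u y"
proof -
  have "u x * P x y \<le> (\<Sum>\<^sub>\<infinity>z. u z * P z y)"
    using finite_sum_le_infsum[OF summable_on_mult_stochastic[OF P u(2) u(1)], of "{x}"]
    by (auto intro!: mult_nonneg_nonneg u(1) stochastic_matrix_nonneg[OF P])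
  then show ?thesis using assms(4) by (simp add: taboo_step_def)
qed

lemma has_sum_taboo_step_weighted:
  assumes P: "stochastic_matrix P" and u: "\<And>x. 0 \<le> u x" "u summable_on UNIV"
    and h: "\<And>y. 0 \<le> h y" "h s = 0"
    and Ph: "\<And>x. ((\<lambda>y. P x y * h y) has_sum Ph x) UNIV"
    and S: "((\<lambda>x. u x * Ph x) has_sum S) UNIV"
  shows "((\<lambda>y. taboo_step P s u y * h y) has_sum S) UNIV"
proof -
  have "taboo_step P s u y * h y = (\<Sum>\<^sub>\<infinity>x. u x * P x y * h y)" for y
  proof (cases "y = s")
    case False
    then show ?thesis
      by (simp add: taboo_step_def infsum_cmult_left')
  qed (simp add: h taboo_step_def)
  then show ?thesis
    using has_sum_kernel_assoc[OF stochastic_matrix_nonneg[OF P] u(1) h(1) Ph S] by simp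
qed

lemma has_sum_taboo_step:
  assumes P: "stochastic_matrix P" and u: "\<And>x. 0 \<le> u x" "(u has_sum a) UNIV"
  shows "(taboo_step P s u has_sum (a - (\<Sum>\<^sub>\<infinity>x. u x * P x s))) UNIV"
proof -
  have us: "u summable_on UNIV" using u(2) by (auto simp: summable_on_def)
  define h where "h y = (if y = s then 0 else (1::real))" for y
  have "((\<lambda>y. P x y - (if y = s then P x s else 0)) has_sum (1 - P x s)) UNIV" for x
    by (rule has_sum_diff[OF stochastic_matrix_has_sum[OF P] has_sum_indicator_point])
  then have Ph: "((\<lambda>y. P x y * h y) has_sum (1 - P x s)) UNIV" for x
    by (rule has_sum_cong[THEN iffD1, rotated]) (auto simp: h_def)
  have S: "((\<lambda>x. u x * (1 - P x s)) has_sum (a - (\<Sum>\<^sub>\<infinity>x. u x * P x s))) UNIV"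
    using has_sum_diff[OF u(2) has_sum_infsum[OF summable_on_mult_stochastic[OF P us u(1)]]]
    by (simp add: algebra_simps)
  have "((\<lambda>y. taboo_step P s u y * h y) has_sum (a - (\<Sum>\<^sub>\<infinity>x. u x * P x s))) UNIV"
    by (rule has_sum_taboo_step_weighted[OF P u(1) us _ _ Ph S]) (auto simp: h_def)
  moreover have "taboo_step P s u y * h y = taboo_step P s u y" for y
    by (simp add: h_def taboo_step_def)
  ultimately show ?thesis by simp
qed

lemma taboo_step_iter:
  assumes P: "stochastic_matrix P" and u: "\<And>x. 0 \<le> u x" "u summable_on UNIV"
  shows "(\<forall>x. 0 \<le> (taboo_step P s ^^ r) u x) \<and> (taboo_step P s ^^ r) u summable_on UNIV
         \<and> infsum ((taboo_step P s ^^ r) u) UNIV \<le> infsum u UNIV"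
proof (induction r)
  case (Suc r)
  define v where "v = (taboo_step P s ^^ r) u"
  have v: "\<And>x. 0 \<le> v x" "(v has_sum infsum v UNIV) UNIV" "infsum v UNIV \<le> infsum u UNIV"
    using Suc by (auto simp: v_def)
  have step: "(taboo_step P s v has_sum (infsum v UNIV - (\<Sum>\<^sub>\<infinity>x. v x * P x s))) UNIV"
    by (rule has_sum_taboo_step[OF P v(1) v(2)])
  have "0 \<le> (\<Sum>\<^sub>\<infinity>x. v x * P x s)"
    using v(1) stochastic_matrix_nonneg[OF P] by (auto intro!: infsum_nonneg)
  then show ?case
    using step v(3) taboo_step_nonneg[OF P v(1)] infsumI[OF step]
    by (auto simp: v_def summable_on_def)
qed (use u in simp)

lemma taboo_0_has_sum: "(taboo P s 0 has_sum 1) UNIV"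
proof -
  have "taboo P s 0 = (\<lambda>y. if y = s then 1 else 0)" by auto
  then show ?thesis using has_sum_indicator_point[of s 1] by simp
qed

lemma has_sum_taboo_0_weighted: "((\<lambda>x. taboo P s 0 x * f x) has_sum f s) UNIV"
  by (rule has_sum_finite_neutralI[of "{s}"]) auto

lemma taboo_mass_0: "infsum (taboo P s 0) UNIV = 1"
  using taboo_0_has_sum by (rule infsumI)

lemma
  assumes P: "stochastic_matrix P"
  shows taboo_nonneg: "0 \<le> taboo P s k x"
    and taboo_summable: "taboo P s k summable_on UNIV"
    and taboo_mass_le_1: "infsum (taboo P s k) UNIV \<le> 1"
proof -
  have "taboo P s k = (taboo_step P s ^^ k) (taboo P s 0)"
    using taboo_add[of P s 0 k] by simp
  moreover have "taboo P s 0 summable_on UNIV" "infsum (taboo P s 0) UNIV = 1"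
    using taboo_0_has_sum[of P s] by (auto simp: summable_on_def infsumI)
  moreover note taboo_step_iter[OF P, where u="taboo P s 0" and s=s and r=k]
  ultimately show "0 \<le> taboo P s k x" "taboo P s k summable_on UNIV" "infsum (taboo P s k) UNIV \<le> 1"
    by auto
qed

lemma first_return_nonneg:
  assumes "stochastic_matrix P"
  shows "0 \<le> first_return P s k"
  by (cases k)
    (auto intro!: infsum_nonneg mult_nonneg_nonneg taboo_nonneg[OF assms] stochastic_matrix_nonneg[OF assms])

lemma taboo_mass_Suc:
  assumes P: "stochastic_matrix P"
  shows "infsum (taboo P s (Suc k)) UNIV = infsum (taboo P s k) UNIV - first_return P s (Suc k)"
  using has_sum_taboo_step[OF P taboo_nonneg[OF P] has_sum_infsum[OF taboo_summable[OF P]]]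
  unfolding taboo_Suc first_return.simps by (rule infsumI)

text \<open>The mass \<open>m k\<close> of \<open>taboo P s k\<close> is the probability that the return time exceeds \<open>k\<close>.\<close>

lemma first_return_partial_sum:
  assumes "stochastic_matrix P"
  shows "(\<Sum>j<Suc K. first_return P s j) = 1 - infsum (taboo P s K) UNIV"
proof (induction K)
  case 0
  show ?case by (simp add: taboo_mass_0 del: taboo.simps)
next
  case (Suc K)
  then show ?case by (simp add: taboo_mass_Suc[OF assms] del: taboo.simps first_return.simps)
qed

lemma first_return_moment_partial_sum:
  assumes "stochastic_matrix P"
  shows "(\<Sum>j<Suc K. real j * first_return P s j)
         = (\<Sum>j<K. infsum (taboo P s j) UNIV) - real K * infsum (taboo P s K) UNIV"
proof (induction K)
  case (Suc K)
  then show ?case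
    by (simp add: taboo_mass_Suc[OF assms] algebra_simps del: taboo.simps first_return.simps)
qed simp

lemma positive_recurrent_stateI_bounded_mass:
  assumes P: "stochastic_matrix P" and B: "\<And>K. (\<Sum>k<K. infsum (taboo P s k) UNIV) \<le> B"
  shows "positive_recurrent_state P s"
proof -
  define m where "m = (\<lambda>k. infsum (taboo P s k) UNIV)"
  define fr where "fr = first_return P s"
  have m_nonneg: "0 \<le> m k" for k
    by (auto simp: m_def intro!: infsum_nonneg taboo_nonneg[OF P])
  have fr_nonneg: "0 \<le> fr k" for k
    by (simp add: fr_def first_return_nonneg[OF P])
  have "summable m"
    by (rule summableI_nonneg_bounded[of m B]) (use m_nonneg B in \<open>auto simp: m_def\<close>)
  then have "(\<lambda>K. \<Sum>j<Suc K. fr j) \<longlonglongrightarrow> 1 - 0"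
    unfolding fr_def first_return_partial_sum[OF P]
    by (intro tendsto_intros summable_LIMSEQ_zero) (simp add: m_def)
  then have "fr sums 1"
    using LIMSEQ_imp_Suc[of "\<lambda>K. \<Sum>j<K. fr j"] by (simp add: sums_def)
  then have returns: "(fr has_sum 1) UNIV"
    by (rule sums_nonneg_imp_has_sum) (rule fr_nonneg)
  have "(\<Sum>j<K. real j * fr j) \<le> B" for K
  proof (cases K)
    case 0
    then show ?thesis using B[of 1] taboo_mass_0[of P s] by simp
  next
    case (Suc K')
    then have "(\<Sum>j<K. real j * fr j) \<le> (\<Sum>j<K'. m j)"
      using first_return_moment_partial_sum[OF P, where K=K' and s=s] m_nonneg[of K']
      by (simp add: fr_def m_def)
    also have "\<dots> \<le> B" using B[of K'] by (simp add: m_def)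
    finally show ?thesis .
  qed
  then have "summable (\<lambda>j. real j * fr j)"
    by (intro summableI_nonneg_bounded[of _ B]) (auto intro!: mult_nonneg_nonneg fr_nonneg)
  then have "(\<lambda>j. real j * fr j) summable_on UNIV"
    by (rule summable_nonneg_imp_summable_on) (auto intro!: mult_nonneg_nonneg fr_nonneg)
  then show ?thesis using returns by (simp add: positive_recurrent_state_def fr_def)
qed

lemma taboo_step_mass_le:
  assumes P: "stochastic_matrix P" and u: "\<And>x. 0 \<le> u x" "u summable_on UNIV"
  shows "infsum (taboo_step P s u) UNIV \<le> infsum u UNIV - u a * P a s"
proof -
  have "u a * P a s \<le> (\<Sum>\<^sub>\<infinity>x. u x * P x s)"
    using finite_sum_le_infsum[OF summable_on_mult_stochastic[OF P u(2)], of "{a}"]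
      u(1) stochastic_matrix_nonneg[OF P] by auto
  then show ?thesis
    using infsumI[OF has_sum_taboo_step[OF P u(1) has_sum_infsum[OF u(2)], of s]] by simp
qed

text \<open>A positive-probability path from \<open>a\<close> to \<open>s\<close> makes the killed chain lose, after a fixed
  number of steps, a fixed fraction of the mass it has at \<open>a\<close>.\<close>

lemma taboo_step_iter_mass_loss:
  assumes P: "stochastic_matrix P" and path: "(\<lambda>a b. P a b > 0)\<^sup>*\<^sup>* a s"
  shows "a \<noteq> s \<longrightarrow> (\<exists>r p. p > 0 \<and> (\<forall>u. (\<forall>x. 0 \<le> u x) \<longrightarrow> u summable_on UNIV \<longrightarrow>
            infsum ((taboo_step P s ^^ r) u) UNIV \<le> infsum u UNIV - p * u a))"
  using path
proof (induction rule: converse_rtranclp_induct)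
  case (step a b)
  show ?case
  proof
    assume "a \<noteq> s"
    show "\<exists>r p. p > 0 \<and> (\<forall>u. (\<forall>x. 0 \<le> u x) \<longrightarrow> u summable_on UNIV \<longrightarrow>
            infsum ((taboo_step P s ^^ r) u) UNIV \<le> infsum u UNIV - p * u a)"
    proof (cases "b = s")
      case True
      have "infsum ((taboo_step P s ^^ 1) u) UNIV \<le> infsum u UNIV - P a s * u a"
        if "\<forall>x. 0 \<le> u x" "u summable_on UNIV" for u
        using taboo_step_mass_le[OF P that(1)[rule_format] that(2), of s a] by (simp add: mult.commute)
      then show ?thesis using step(1) True by blast
    next
      case False
      then obtain r p where p: "p > 0" and rp: "\<And>u. (\<forall>x. 0 \<le> u x) \<Longrightarrow> u summable_on UNIV \<Longrightarrow>
            infsum ((taboo_step P s ^^ r) u) UNIV \<le> infsum u UNIV - p * u b"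
        using step(3) by blast
      have "infsum ((taboo_step P s ^^ Suc r) u) UNIV \<le> infsum u UNIV - (p * P a b) * u a"
        if u: "\<forall>x. 0 \<le> u x" "u summable_on UNIV" for u
      proof -
        have ku: "\<forall>x. 0 \<le> taboo_step P s u x" "taboo_step P s u summable_on UNIV"
          "infsum (taboo_step P s u) UNIV \<le> infsum u UNIV"
          using taboo_step_iter[OF P, where u=u and s=s and r=1] u by auto
        have "infsum ((taboo_step P s ^^ Suc r) u) UNIV = infsum ((taboo_step P s ^^ r) (taboo_step P s u)) UNIV"
          by (simp add: funpow_Suc_right del: funpow.simps)
        also have "\<dots> \<le> infsum (taboo_step P s u) UNIV - p * taboo_step P s u b"
          using rp[OF ku(1) ku(2)] .
        also have "\<dots> \<le> infsum u UNIV - p * (u a * P a b)"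
          using ku(3) taboo_step_ge[OF P _ u(2) False, of a] u(1) p
          by (smt (verit) mult_left_mono)
        finally show ?thesis by (simp add: algebra_simps)
      qed
      then show ?thesis using p step(1) by (intro exI[of _ "Suc r"] exI[of _ "p * P a b"]) auto
    qed
  qed
qed simp

lemma sum_diff_shift_le:
  fixes f :: "nat \<Rightarrow> real"
  assumes "\<And>k. 0 \<le> f k" "\<And>k. f k \<le> 1"
  shows "(\<Sum>k<K. f k - f (k + r)) \<le> real r"
proof -
  have "(\<Sum>k<K. f k) \<le> (\<Sum>k\<in>{..<r} \<union> {r..<K + r}. f k)"
    by (rule sum_mono2) (use assms in auto)
  also have "\<dots> = (\<Sum>k<r. f k) + (\<Sum>k<K. f (k + r))"
    by (subst sum.union_disjoint) (auto simp: sum.shift_bounds_nat_ivl[of f 0 r K, simplified] atLeast0LessThan)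
  also have "(\<Sum>k<r. f k) \<le> (\<Sum>k<r. 1)"
    by (rule sum_mono) (use assms in auto)
  finally show ?thesis by (simp add: sum_subtractf)
qed

lemma bounded_taboo_visits:
  assumes P: "stochastic_matrix P" and irr: "irreducible P"
  shows "\<exists>C. \<forall>K. (\<Sum>k<K. taboo P s k a) \<le> C"
proof (cases "a = s")
  case True
  have "(\<Sum>k<K. taboo P s k s) \<le> 1" for K
    by (cases K) (simp_all add: sum.lessThan_Suc_shift del: sum.lessThan_Suc)
  then show ?thesis using True by blast
next
  case False
  have path: "(\<lambda>a b. P a b > 0)\<^sup>*\<^sup>* a s" using irr by (auto simp: irreducible_def)
  obtain r p where p: "p > 0" and rp: "\<And>u. (\<forall>x. 0 \<le> u x) \<Longrightarrow> u summable_on UNIV \<Longrightarrow>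
            infsum ((taboo_step P s ^^ r) u) UNIV \<le> infsum u UNIV - p * u a"
    using taboo_step_iter_mass_loss[OF P path] False by blast
  define m where "m k = infsum (taboo P s k) UNIV" for k
  have loss: "p * taboo P s k a \<le> m k - m (k + r)" for k
    using rp[of "taboo P s k"] taboo_nonneg[OF P] taboo_summable[OF P] by (simp add: m_def taboo_add)
  have "p * (\<Sum>k<K. taboo P s k a) \<le> real r" for K
  proof -
    have "p * (\<Sum>k<K. taboo P s k a) = (\<Sum>k<K. p * taboo P s k a)"
      by (simp add: sum_distrib_left)
    also have "\<dots> \<le> (\<Sum>k<K. m k - m (k + r))"
      by (intro sum_mono loss)
    also have "\<dots> \<le> real r"
      by (rule sum_diff_shift_le)
        (auto simp: m_def intro!: infsum_nonneg taboo_nonneg[OF P] taboo_mass_le_1[OF P])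
    finally show ?thesis .
  qed
  then have "(\<Sum>k<K. taboo P s k a) \<le> real r / p" for K
    using p by (simp add: field_simps mult.commute)
  then show ?thesis by blast
qed

section \<open>Foster's criterion and a submartingale obstruction\<close>

lemma has_sum_taboo_step_Lyapunov:
  assumes P: "stochastic_matrix P" and V: "\<And>x. 0 \<le> V x"
    and PV: "\<And>x. ((\<lambda>y. P x y * V y) has_sum PV x) UNIV" and bounded: "\<And>x. PV x \<le> V x + b"
    and u: "\<And>x. 0 \<le> u x" "u summable_on UNIV" and uV: "(\<lambda>x. u x * V x) summable_on UNIV"
  shows summable_on_Lyapunov_drift: "(\<lambda>x. u x * PV x - u x * P x s * V s) summable_on UNIV"
    and "((\<lambda>y. taboo_step P s u y * V y) has_sum (\<Sum>\<^sub>\<infinity>x. u x * PV x - u x * P x s * V s)) UNIV"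
proof -
  have PV_nonneg: "0 \<le> PV x" for x
    by (rule has_sum_nonneg[OF PV]) (auto intro!: mult_nonneg_nonneg V stochastic_matrix_nonneg[OF P])
  have uPV: "(\<lambda>x. u x * PV x) summable_on UNIV"
  proof (rule summable_on_comparison_test[OF summable_on_add[OF uV summable_on_cmult_right[OF u(2)]]])
    fix x
    show "0 \<le> u x * PV x" using u(1) PV_nonneg by simp
    show "u x * PV x \<le> u x * V x + b * u x"
      using mult_left_mono[OF bounded u(1)] by (simp add: algebra_simps)
  qed
  have uPs: "(\<lambda>x. u x * P x s * V s) summable_on UNIV"
    by (intro summable_on_cmult_left summable_on_mult_stochastic[OF P u(2) u(1)])
  show summable: "(\<lambda>x. u x * PV x - u x * P x s * V s) summable_on UNIV"
    unfolding summable_on_def by (rule exI has_sum_diff has_sum_infsum uPV uPs)+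
  define hV where "hV y = (if y = s then 0 else V y)" for y
  have "((\<lambda>y. P x y * V y - (if y = s then P x s * V s else 0)) has_sum (PV x - P x s * V s)) UNIV" for x
    by (rule has_sum_diff[OF PV has_sum_indicator_point])
  then have "((\<lambda>y. P x y * hV y) has_sum (PV x - P x s * V s)) UNIV" for x
    by (rule has_sum_cong[THEN iffD1, rotated]) (auto simp: hV_def)
  moreover have "((\<lambda>x. u x * (PV x - P x s * V s)) has_sum (\<Sum>\<^sub>\<infinity>x. u x * PV x - u x * P x s * V s)) UNIV"
    using has_sum_infsum[OF summable] by (simp add: right_diff_distrib mult.assoc)
  ultimately have "((\<lambda>y. taboo_step P s u y * hV y) has_sum (\<Sum>\<^sub>\<infinity>x. u x * PV x - u x * P x s * V s)) UNIV"
    by (intro has_sum_taboo_step_weighted[OF P u(1,2)]) (auto simp: hV_def V)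
  moreover have "taboo_step P s u y * hV y = taboo_step P s u y * V y" for y
    by (simp add: hV_def taboo_step_def)
  ultimately show "((\<lambda>y. taboo_step P s u y * V y) has_sum (\<Sum>\<^sub>\<infinity>x. u x * PV x - u x * P x s * V s)) UNIV"
    by simp
qed

context
  fixes P :: "nat \<Rightarrow> nat \<Rightarrow> real" and V PV :: "nat \<Rightarrow> real" and F :: "nat set" and b :: real
  assumes P: "stochastic_matrix P" and V: "\<And>x. 0 \<le> V x"
    and PV: "\<And>x. ((\<lambda>y. P x y * V y) has_sum PV x) UNIV" and F: "finite F"
    and outside: "\<And>x. x \<notin> F \<Longrightarrow> PV x \<le> V x - 1" and bounded: "\<And>x. PV x \<le> V x + b"
begin

lemma summable_on_taboo_Lyapunov: "(\<lambda>x. taboo P s k x * V x) summable_on UNIV"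
proof (induction k)
  case 0
  show ?case using has_sum_taboo_0_weighted by (auto simp: summable_on_def)
next
  case (Suc k)
  from has_sum_taboo_step_Lyapunov(2)[OF P V PV bounded taboo_nonneg[OF P] taboo_summable[OF P] Suc]
  show ?case by (auto simp: summable_on_def taboo_Suc)
qed

lemma taboo_Lyapunov_drift:
  "(\<Sum>\<^sub>\<infinity>x. taboo P s (Suc k) x * V x)
     \<le> (\<Sum>\<^sub>\<infinity>x. taboo P s k x * V x) - infsum (taboo P s k) UNIV + (b + 1) * (\<Sum>x\<in>F. taboo P s k x)"
proof -
  define u where "u = taboo P s k"
  have u: "\<And>x. 0 \<le> u x" "u summable_on UNIV" "(\<lambda>x. u x * V x) summable_on UNIV"
    by (simp_all add: u_def taboo_nonneg[OF P] taboo_summable[OF P] summable_on_taboo_Lyapunov)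
  have "((\<lambda>y. taboo P s (Suc k) y * V y) has_sum (\<Sum>\<^sub>\<infinity>x. u x * PV x - u x * P x s * V s)) UNIV"
    using has_sum_taboo_step_Lyapunov(2)[OF P V PV bounded u] by (simp add: u_def taboo_Suc)
  then have next_eq: "(\<Sum>\<^sub>\<infinity>x. taboo P s (Suc k) x * V x) = (\<Sum>\<^sub>\<infinity>x. u x * PV x - u x * P x s * V s)"
    by (rule infsumI)
  have "((\<lambda>x. if x \<in> F then u x else 0) has_sum (\<Sum>x\<in>F. u x)) UNIV"
    by (rule has_sum_finite_neutralI[OF F]) auto
  then have bound: "((\<lambda>x. (u x * V x - u x) + (b + 1) * (if x \<in> F then u x else 0)) has_sum
      ((\<Sum>\<^sub>\<infinity>x. u x * V x) - infsum u UNIV + (b + 1) * (\<Sum>x\<in>F. u x))) UNIV"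
    by (intro has_sum_add has_sum_diff has_sum_cmult_right has_sum_infsum u)
  have "(\<Sum>\<^sub>\<infinity>x. u x * PV x - u x * P x s * V s)
      \<le> (\<Sum>\<^sub>\<infinity>x. u x * V x) - infsum u UNIV + (b + 1) * (\<Sum>x\<in>F. u x)"
  proof (rule has_sum_mono[OF has_sum_infsum[OF summable_on_Lyapunov_drift[OF P V PV bounded u]] bound])
    fix x
    have "u x * PV x \<le> u x * V x - u x + (b + 1) * (if x \<in> F then u x else 0)"
    proof (cases "x \<in> F")
      case True
      then show ?thesis using mult_left_mono[OF bounded[of x] u(1)[of x]] by (simp add: algebra_simps)
    next
      case False
      then show ?thesis using mult_left_mono[OF outside[OF False] u(1)[of x]] by (simp add: algebra_simps)
    qed
    moreover have "0 \<le> u x * P x s * V s"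
      using u(1) stochastic_matrix_nonneg[OF P] V by simp
    ultimately show "u x * PV x - u x * P x s * V s \<le> (u x * V x - u x) + (b + 1) * (if x \<in> F then u x else 0)"
      by linarith
  qed
  then show ?thesis using next_eq by (simp add: u_def)
qed

text \<open>Telescoping the drift inequality bounds the expected return time
  \<open>\<Sum>k. m k\<close> by \<open>V s\<close> plus a multiple of the expected number of visits to \<open>F\<close> before returning,
  which is finite by irreducibility.\<close>

lemma foster_criterion:
  assumes irr: "irreducible P" and b: "0 \<le> b"
  shows "positive_recurrent_state P s"
proof -
  define W where "W k = (\<Sum>\<^sub>\<infinity>x. taboo P s k x * V x)" for k
  define m where "m k = infsum (taboo P s k) UNIV" for k
  have W0: "W 0 = V s"
    using has_sum_taboo_0_weighted by (simp add: W_def infsumI)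
  have W_nonneg: "0 \<le> W k" for k
    by (auto simp: W_def intro!: infsum_nonneg mult_nonneg_nonneg taboo_nonneg[OF P] V)
  have telescope: "W K + (\<Sum>k<K. m k) \<le> V s + (b + 1) * (\<Sum>k<K. \<Sum>x\<in>F. taboo P s k x)" for K
  proof (induction K)
    case (Suc K)
    then show ?case
      using taboo_Lyapunov_drift[of s K] by (simp add: W_def m_def algebra_simps)
  qed (simp add: W0)
  have "\<exists>C. \<forall>K. (\<Sum>k<K. taboo P s k x) \<le> C" for x
    by (rule bounded_taboo_visits[OF P irr])
  then obtain C where C: "\<And>x K. (\<Sum>k<K. taboo P s k x) \<le> C x" by metis
  have "(\<Sum>k<K. m k) \<le> V s + (b + 1) * (\<Sum>x\<in>F. C x)" for K
  proof -
    have "(\<Sum>k<K. \<Sum>x\<in>F. taboo P s k x) = (\<Sum>x\<in>F. \<Sum>k<K. taboo P s k x)"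
      by (rule sum.swap)
    also have "\<dots> \<le> (\<Sum>x\<in>F. C x)" by (intro sum_mono C)
    finally have "(b + 1) * (\<Sum>k<K. \<Sum>x\<in>F. taboo P s k x) \<le> (b + 1) * (\<Sum>x\<in>F. C x)"
      using b by (intro mult_left_mono) auto
    then show ?thesis using telescope[of K] W_nonneg[of K] by linarith
  qed
  then show ?thesis by (intro positive_recurrent_stateI_bounded_mass[OF P]) (simp add: m_def)
qed

end

lemma positive_recurrent_taboo_mass_tail:
  assumes P: "stochastic_matrix P" and pr: "positive_recurrent_state P s" and e: "0 < e"
  shows "\<exists>k\<ge>1. real k * infsum (taboo P s k) UNIV < e"
proof -
  define fr where "fr = first_return P s"
  have fr_nonneg: "0 \<le> fr k" for k by (simp add: fr_def first_return_nonneg[OF P])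
  have sums: "fr sums 1"
    using pr by (auto simp: positive_recurrent_state_def fr_def intro: has_sum_imp_sums)
  have moment: "summable (\<lambda>j. real j * fr j)"
    using pr by (auto simp: positive_recurrent_state_def fr_def intro: summable_on_imp_summable)
  have "summable fr" using sums by (simp add: sums_iff)
  then have tail: "summable (\<lambda>i. fr (i + n))" for n
    by (rule summable_ignore_initial_segment)
  have mass_tail: "infsum (taboo P s K) UNIV = (\<Sum>i. fr (i + Suc K))" for K
  proof -
    have "suminf fr = (\<Sum>i. fr (i + Suc K)) + (\<Sum>j<Suc K. fr j)"
      by (rule suminf_split_initial_segment[OF \<open>summable fr\<close>])
    moreover have "suminf fr = 1" using sums by (rule sums_unique[symmetric])
    moreover have "(\<Sum>j<Suc K. fr j) = 1 - infsum (taboo P s K) UNIV"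
      unfolding fr_def by (rule first_return_partial_sum[OF P])
    ultimately show ?thesis by linarith
  qed
  obtain N where N: "\<And>n. n \<ge> N \<Longrightarrow> norm (\<Sum>i. real (i + n) * fr (i + n)) < e"
    using suminf_exist_split[OF e moment] by auto
  define k where "k = max N 1"
  have "real k * infsum (taboo P s k) UNIV = (\<Sum>i. real k * fr (i + Suc k))"
    unfolding mass_tail by (rule suminf_mult[symmetric]) (rule tail)
  also have "\<dots> \<le> (\<Sum>i. real (i + Suc k) * fr (i + Suc k))"
    using summable_ignore_initial_segment[OF moment, of "Suc k"] tail[of "Suc k"]
    by (intro suminf_le summable_mult mult_right_mono fr_nonneg) auto
  also have "\<dots> < e"
    using N[of "Suc k"] by (simp only: real_norm_def abs_less_iff) (simp add: k_def)
  finally show ?thesis by (intro exI[of _ k]) (auto simp: k_def)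
qed

lemma taboo_support_height:
  fixes t :: "nat \<Rightarrow> nat"
  assumes P: "stochastic_matrix P" and t0: "t s = 0" and t_step: "\<And>x y. P x y > 0 \<Longrightarrow> t y \<le> t x + 1"
  shows "taboo P s k x \<noteq> 0 \<Longrightarrow> t x \<le> k"
proof (induction k arbitrary: x)
  case 0
  then show ?case using t0 by (auto split: if_splits)
next
  case (Suc k)
  then have "(\<Sum>\<^sub>\<infinity>z. taboo P s k z * P z x) \<noteq> 0" by (auto split: if_splits)
  then obtain z where "taboo P s k z * P z x \<noteq> 0"
    using infsum_0[of UNIV "\<lambda>z. taboo P s k z * P z x"] by blast
  then have "taboo P s k z \<noteq> 0" and "P z x > 0"
    using stochastic_matrix_nonneg[OF P, of z x] by (auto simp: less_le)
  then show ?case using Suc.IH t_step by fastforce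
qed

lemma taboo_weighted_height_bound:
  fixes t :: "nat \<Rightarrow> nat"
  assumes P: "stochastic_matrix P" and t0: "t s = 0" and t_step: "\<And>x y. P x y > 0 \<Longrightarrow> t y \<le> t x + 1"
    and h: "\<And>x. 0 \<le> h x" "\<And>x. h x \<le> real (t x) + d"
  shows "(\<lambda>x. taboo P s k x * h x) summable_on UNIV"
    and "(\<Sum>\<^sub>\<infinity>x. taboo P s k x * h x) \<le> (real k + d) * infsum (taboo P s k) UNIV"
proof -
  have le: "taboo P s k x * h x \<le> (real k + d) * taboo P s k x" for x
  proof (cases "taboo P s k x = 0")
    case False
    then have "h x \<le> real k + d"
      using taboo_support_height[where t=t, OF P t0 t_step False] h(2)[of x] by linarith
    then show ?thesis using taboo_nonneg[OF P] by (simp add: mult.commute mult_right_mono)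
  qed simp
  have bound: "(\<lambda>x. (real k + d) * taboo P s k x) summable_on UNIV"
    by (rule summable_on_cmult_right[OF taboo_summable[OF P]])
  show summable: "(\<lambda>x. taboo P s k x * h x) summable_on UNIV"
    by (rule summable_on_comparison_test[OF bound]) (use le taboo_nonneg[OF P] h(1) in auto)
  show "(\<Sum>\<^sub>\<infinity>x. taboo P s k x * h x) \<le> (real k + d) * infsum (taboo P s k) UNIV"
    using infsum_mono[OF summable bound le] by (simp add: infsum_cmult_right')
qed

text \<open>A positive recurrent chain admits no nonnegative submartingale \<open>f\<close> that vanishes at \<open>s\<close>,
  is bounded by a height function and increases strictly in expectation at \<open>s\<close>: the expectation
  of \<open>f\<close> along the killed chain, \<open>\<Sum>x. taboo P s k x * f x\<close>, would stay above \<open>Pf s\<close> while it is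
  bounded by \<open>k\<close> times the tail probability \<open>m k\<close> of the return time, which is \<open>o(1/k)\<close>.\<close>

lemma positive_recurrent_no_submartingale:
  fixes t :: "nat \<Rightarrow> nat"
  assumes P: "stochastic_matrix P" and pr: "positive_recurrent_state P s"
    and f: "\<And>x. 0 \<le> f x" "f s = 0" and f_le: "\<And>x. f x \<le> real (t x)"
    and t0: "t s = 0" and t_step: "\<And>x y. P x y > 0 \<Longrightarrow> t y \<le> t x + 1"
    and Pf: "\<And>x. ((\<lambda>y. P x y * f y) has_sum Pf x) UNIV"
    and sub: "\<And>x. f x \<le> Pf x" and strict: "0 < Pf s"
  shows False
proof -
  have Pf_le: "Pf x \<le> real (t x) + 1" for x
  proof (rule has_sum_mono[OF Pf has_sum_cmult_left[OF stochastic_matrix_has_sum[OF P]], simplified])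
    fix y
    show "P x y * f y \<le> P x y * (real (t x) + 1)"
      using t_step[of x y] f_le[of y] stochastic_matrix_nonneg[OF P, of x y]
      by (cases "P x y > 0") (auto intro!: mult_left_mono)
  qed
  have Pf_nonneg: "0 \<le> Pf x" for x using f(1)[of x] sub[of x] by linarith
  note f_bound = taboo_weighted_height_bound[where t=t and h=f and d=0, OF P t0 t_step f(1)]
  note Pf_bound = taboo_weighted_height_bound[where t=t and h=Pf and d=1, OF P t0 t_step Pf_nonneg Pf_le]
  define A where "A k = (\<Sum>\<^sub>\<infinity>x. taboo P s k x * f x)" for k
  have A_Suc: "A (Suc k) = (\<Sum>\<^sub>\<infinity>x. taboo P s k x * Pf x)" for k
    using has_sum_taboo_step_weighted[OF P taboo_nonneg[OF P] taboo_summable[OF P] f Pf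
        has_sum_infsum[OF Pf_bound(1)]]
    by (simp add: A_def taboo_Suc infsumI)
  have A_mono: "A k \<le> A (Suc k)" for k
    unfolding A_Suc unfolding A_def
    by (rule infsum_mono[OF f_bound(1) Pf_bound(1)]) (simp_all add: f_le mult_left_mono sub taboo_nonneg[OF P])
  have "A 1 = Pf s"
    using A_Suc[of 0] infsumI[OF has_sum_taboo_0_weighted] by simp
  then have A_ge: "Pf s \<le> A k" if "k \<ge> 1" for k
    using that by (induction k) (auto intro: order_trans[OF _ A_mono] simp: le_Suc_eq)
  obtain k where "k \<ge> 1" "real k * infsum (taboo P s k) UNIV < Pf s"
    using positive_recurrent_taboo_mass_tail[OF P pr strict] by blast
  then show False using A_ge[of k] f_bound(2)[of k] by (simp add: A_def f_le)
qed

section \<open>Graphs\<close>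

lemma simple_graph_nbrs:
  assumes "simple_graph n E" "j \<in> nbrs E k"
  shows "j \<in> {1..n}" "k \<in> {1..n}" "j \<noteq> k"
proof -
  from assms obtain a b where "{k, j} = {a, b}" "a \<noteq> b" "a \<in> {1..n}" "b \<in> {1..n}"
    unfolding simple_graph_def nbrs_def by blast
  then show "j \<in> {1..n}" "k \<in> {1..n}" "j \<noteq> k" by (auto simp: doubleton_eq_iff)
qed

lemma nbrs_sym: "j \<in> nbrs E k \<longleftrightarrow> k \<in> nbrs E j"
  by (simp add: nbrs_def insert_commute)

lemma simple_graph_finite: "simple_graph n E \<Longrightarrow> finite E"
  by (rule finite_subset[of _ "Pow {1..n}"]) (auto simp: simple_graph_def)

lemma simple_graph_no_loop:
  assumes "simple_graph n E"
  shows "{i} \<notin> E"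
proof
  assume "{i} \<in> E"
  then obtain a b where "{i} = {a, b}" "a \<noteq> b" using assms by (auto simp: simple_graph_def)
  then show False by (simp add: doubleton_eq_iff)
qed

lemma simple_graph_finite_nbrs: "simple_graph n E \<Longrightarrow> finite (nbrs E i)"
  by (rule finite_subset[of _ "{1..n}"]) (auto dest: simple_graph_nbrs(1))

lemma independent_set_disjoint_nbrs:
  assumes "independent_set n E I"
  shows "I \<inter> (\<Union>k\<in>I. nbrs E k) = {}"
proof -
  have "\<And>i j. i \<in> I \<Longrightarrow> j \<in> I \<Longrightarrow> {i, j} \<notin> E"
    using assms by (auto simp: independent_set_def)
  then show ?thesis by (auto simp: nbrs_def)
qed

lemma surjective_graph_nbrs_nonempty:
  assumes sg: "simple_graph n E" and surj: "surjective_graph n E" and k: "k \<in> {1..n}"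
  shows "nbrs E k \<noteq> {}"
proof
  assume isolated: "nbrs E k = {}"
  have "j = k" if "(adj E)\<^sup>*\<^sup>* k j" for j
    using that
  proof (induction rule: rtranclp_induct)
    case (step y z)
    then have "z \<in> nbrs E k" by (simp add: adj_def nbrs_def)
    then show ?case using isolated by simp
  qed simp
  then have C: "component E k \<subseteq> {k}" by (auto simp: component_def)
  have "bipartite_on E (component E k)"
    unfolding bipartite_on_def
  proof (intro exI[of _ "\<lambda>_. True"] ballI impI)
    fix x y assume "x \<in> component E k" "y \<in> component E k" "{x, y} \<in> E"
    moreover have "x = k" "y = k" using C \<open>x \<in> component E k\<close> \<open>y \<in> component E k\<close> by auto
    ultimately have "{k} \<in> E" by simp
    then show "True \<noteq> True" using simple_graph_no_loop[OF sg] by blast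
  qed
  then show False using surj k by (simp add: surjective_graph_def)
qed

text \<open>If no edge leaves \<open>I \<union> V(I)\<close> through \<open>V(I)\<close>, the component of a vertex of the independent
  set \<open>I\<close> lies in \<open>I \<union> V(I)\<close>, and membership in \<open>I\<close> two-colours it.\<close>

lemma independent_set_component_bipartite:
  assumes ind: "independent_set n E I" and i0: "i0 \<in> I"
    and closed: "\<And>e. e \<in> E \<Longrightarrow> e \<inter> (\<Union>k\<in>I. nbrs E k) \<noteq> {} \<Longrightarrow> e \<inter> I \<noteq> {}"
  shows "bipartite_on E (component E i0)"
proof -
  define VI where "VI = (\<Union>k\<in>I. nbrs E k)"
  have edge: "y \<in> VI \<and> y \<notin> I" if "{x, y} \<in> E" "x \<in> I" for x y
    using that ind by (auto simp: VI_def nbrs_def independent_set_def)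
  have edge': "y \<in> I" if "{x, y} \<in> E" "x \<in> VI" "x \<notin> I" for x y
    using that closed[of "{x, y}"] by (auto simp: VI_def)
  have reach: "x \<in> I \<union> VI" if "(adj E)\<^sup>*\<^sup>* i0 x" for x
    using that
  proof (induction rule: rtranclp_induct)
    case (step x y)
    then have "{x, y} \<in> E" by (simp add: adj_def)
    then show ?case using step.IH edge edge' by blast
  qed (use i0 in simp)
  show ?thesis
    unfolding bipartite_on_def
  proof (intro exI[of _ "\<lambda>x. x \<in> I"] ballI impI)
    fix x y assume "x \<in> component E i0" "{x, y} \<in> E"
    moreover from this have "x \<in> I \<union> VI" using reach by (simp add: component_def)
    ultimately show "(x \<in> I) \<noteq> (y \<in> I)"
      using edge edge' by blast
  qed
qed

lemma sum_incidence_edge: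
  assumes "finite A" "i \<noteq> j"
  shows "(\<Sum>k\<in>A. incidence k {i, j}) = of_bool (i \<in> A) + of_bool (j \<in> A)"
proof -
  have "(\<Sum>k\<in>A. incidence k {i, j}) = (\<Sum>k\<in>A. of_bool (k = i) + of_bool (k = j))"
    using assms(2) by (intro sum.cong) (auto simp: incidence_def)
  also have "\<dots> = of_bool (i \<in> A) + of_bool (j \<in> A)"
    using assms(1) by (simp add: sum.distrib of_bool_def sum.delta)
  finally show ?thesis .
qed

lemma sum_eq_sum_edges_incidence:
  assumes "A \<subseteq> {1..n}" and "\<forall>i\<in>{1..n}. (\<Sum>e\<in>E. incidence i e * \<mu> e) = lam i"
  shows "(\<Sum>i\<in>A. lam i) = (\<Sum>e\<in>E. \<mu> e * (\<Sum>i\<in>A. incidence i e))"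
proof -
  have "(\<Sum>i\<in>A. lam i) = (\<Sum>i\<in>A. \<Sum>e\<in>E. incidence i e * \<mu> e)"
    using assms by (intro sum.cong) auto
  also have "\<dots> = (\<Sum>e\<in>E. \<mu> e * (\<Sum>i\<in>A. incidence i e))"
    by (subst sum.swap) (simp add: sum_distrib_left mult.commute)
  finally show ?thesis .
qed

lemma incidence_independent_set_le_nbrs:
  assumes sg: "simple_graph n E" and ind: "independent_set n E I" and e: "e \<in> E"
  defines "VI \<equiv> \<Union>k\<in>I. nbrs E k"
  shows "(\<Sum>i\<in>I. incidence i e) \<le> (\<Sum>i\<in>VI. incidence i e)"
    and "e \<inter> VI \<noteq> {} \<Longrightarrow> e \<inter> I = {} \<Longrightarrow> (\<Sum>i\<in>I. incidence i e) + 1 \<le> (\<Sum>i\<in>VI. incidence i e)"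
proof -
  have "I \<subseteq> {1..n}" "VI \<subseteq> {1..n}"
    using ind simple_graph_nbrs(1)[OF sg] by (auto simp: independent_set_def VI_def)
  then have fin: "finite I" "finite VI" by (auto intro: finite_subset)
  obtain i j where ij: "e = {i, j}" "i \<noteq> j" using sg e by (auto simp: simple_graph_def)
  have "j \<in> VI" if "i \<in> I" using that e ij by (auto simp: VI_def nbrs_def)
  moreover have "i \<in> VI" if "j \<in> I" using that e ij by (auto simp: VI_def nbrs_def insert_commute)
  moreover have "\<not> (i \<in> I \<and> j \<in> I)" using ind e ij by (auto simp: independent_set_def)
  moreover have "I \<inter> VI = {}" using independent_set_disjoint_nbrs[OF ind] by (simp add: VI_def)
  ultimately show "(\<Sum>i\<in>I. incidence i e) \<le> (\<Sum>i\<in>VI. incidence i e)"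
    and "e \<inter> VI \<noteq> {} \<Longrightarrow> e \<inter> I = {} \<Longrightarrow> (\<Sum>i\<in>I. incidence i e) + 1 \<le> (\<Sum>i\<in>VI. incidence i e)"
    unfolding ij sum_incidence_edge[OF fin(1) ij(2)] sum_incidence_edge[OF fin(2) ij(2)] by auto
qed

lemma independent_set_strict_if_edge_rates:
  assumes sg: "simple_graph n E" and surj: "surjective_graph n E"
    and \<mu>_pos: "\<forall>e\<in>E. \<mu> e > 0"
    and \<mu>: "\<forall>i\<in>{1..n}. (\<Sum>e\<in>E. incidence i e * \<mu> e) = lam i"
    and ind: "independent_set n E I"
  shows "(\<Sum>i\<in>I. lam i) < (\<Sum>i\<in>(\<Union>k\<in>I. nbrs E k). lam i)"
proof -
  define VI where "VI = (\<Union>k\<in>I. nbrs E k)"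
  have I: "I \<subseteq> {1..n}" "I \<noteq> {}" and VI: "VI \<subseteq> {1..n}"
    using ind simple_graph_nbrs(1)[OF sg] by (auto simp: independent_set_def VI_def)
  define a where "a e = (\<Sum>i\<in>I. incidence i e)" for e
  define b where "b e = (\<Sum>i\<in>VI. incidence i e)" for e
  have ab: "a e \<le> b e \<and> (e \<inter> VI \<noteq> {} \<and> e \<inter> I = {} \<longrightarrow> a e + 1 \<le> b e)" if "e \<in> E" for e
    using incidence_independent_set_le_nbrs[OF sg ind that] by (simp add: a_def b_def VI_def)
  have "(\<Sum>i\<in>VI. lam i) - (\<Sum>i\<in>I. lam i) = (\<Sum>e\<in>E. \<mu> e * (b e - a e))"
    using sum_eq_sum_edges_incidence[OF I(1) \<mu>] sum_eq_sum_edges_incidence[OF VI \<mu>]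
    by (simp add: a_def b_def sum_subtractf[symmetric] algebra_simps)
  moreover have "0 < (\<Sum>e\<in>E. \<mu> e * (b e - a e))"
  proof (cases "\<exists>e\<in>E. e \<inter> VI \<noteq> {} \<and> e \<inter> I = {}")
    case True
    then obtain e where e: "e \<in> E" "e \<inter> VI \<noteq> {}" "e \<inter> I = {}" by blast
    show ?thesis
    proof (rule sum_pos2[OF simple_graph_finite[OF sg] e(1)])
      show "0 < \<mu> e * (b e - a e)" using ab[OF e(1)] e \<mu>_pos by simp
      show "\<And>x. x \<in> E \<Longrightarrow> 0 \<le> \<mu> x * (b x - a x)" using ab \<mu>_pos by (simp add: less_imp_le)
    qed
  next
    case False
    obtain i0 where "i0 \<in> I" using I by blast
    with False have "bipartite_on E (component E i0)"
      by (intro independent_set_component_bipartite[OF ind]) (auto simp: VI_def)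
    moreover have "i0 \<in> {1..n}" using \<open>i0 \<in> I\<close> I by auto
    ultimately show ?thesis using surj by (auto simp: surjective_graph_def)
  qed
  ultimately show ?thesis by (simp add: VI_def)
qed

section \<open>Necessity of the independent-set condition\<close>

definition arrival_kernel :: "nat \<Rightarrow> (nat \<Rightarrow> nat \<Rightarrow> nat option \<Rightarrow> nat \<Rightarrow> real) \<Rightarrow> nat \<Rightarrow> nat \<Rightarrow> nat \<Rightarrow> real" where
  "arrival_kernel n Phi s i s' = Phi s i None s' + (\<Sum>j\<in>{1..n}. Phi s i (Some j) s')"

definition queue_total :: "nat \<Rightarrow> (nat \<Rightarrow> nat) \<Rightarrow> nat" where
  "queue_total n x = (\<Sum>k\<in>{1..n}. x k)"

lemma policy_chain_arrival_kernel:
  "policy_chain n lam Phi s s' = (\<Sum>i\<in>{1..n}. lam i / (\<Sum>k\<in>{1..n}. lam k) * arrival_kernel n Phi s i s')"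
  by (simp add: policy_chain_def arrival_kernel_def)

lemma has_sum_weighted_kernels:
  fixes K :: "nat \<Rightarrow> nat \<Rightarrow> real"
  assumes "finite A" "\<And>i. i \<in> A \<Longrightarrow> ((\<lambda>y. K i y * h y) has_sum H i) UNIV"
  shows "((\<lambda>y. (\<Sum>i\<in>A. c i * K i y) * h y) has_sum (\<Sum>i\<in>A. c i * H i)) UNIV"
  using has_sum_sum[OF assms(1), of "\<lambda>i y. c i * (K i y * h y)"] assms(2)
  by (simp add: has_sum_cmult_right sum_distrib_right mult.assoc)

context
  fixes n :: nat and E :: "nat set set" and sz :: "nat \<Rightarrow> nat \<Rightarrow> nat" and s0 :: nat
    and Phi :: "nat \<Rightarrow> nat \<Rightarrow> nat option \<Rightarrow> nat \<Rightarrow> real"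
  assumes mp: "matching_policy n E sz s0 Phi"
begin

lemma arrival_kernel_nonneg: "0 \<le> arrival_kernel n Phi s i s'"
  using mp by (auto simp: arrival_kernel_def matching_policy_def intro!: add_nonneg_nonneg sum_nonneg)

lemma arrival_kernel_has_sum: "i \<in> {1..n} \<Longrightarrow> (arrival_kernel n Phi s i has_sum 1) UNIV"
  using mp unfolding matching_policy_def arrival_kernel_def by blast

lemma arrival_kernel_pos_cases:
  assumes i: "i \<in> {1..n}" and pos: "0 < arrival_kernel n Phi s i s'"
  shows "sz s' = (sz s)(i := sz s i + 1) \<or>
         (\<exists>j\<in>nbrs E i. 1 \<le> sz s j \<and> sz s' = (sz s)(j := sz s j - 1))"
proof -
  have "0 < Phi s i None s' \<or> (\<exists>j\<in>{1..n}. 0 < Phi s i (Some j) s')"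
  proof (rule ccontr)
    assume "\<not> ?thesis"
    then have "Phi s i None s' \<le> 0" "(\<Sum>j\<in>{1..n}. Phi s i (Some j) s') \<le> 0"
      by (auto intro!: sum_nonpos simp: not_less)
    with pos show False by (simp add: arrival_kernel_def)
  qed
  then obtain j where "0 < Phi s i j s'" by blast
  with mp i show ?thesis unfolding matching_policy_def by blast
qed

lemma stochastic_policy_chain:
  assumes "n \<ge> 1" and lam: "\<forall>i\<in>{1..n}. lam i > 0"
  shows "stochastic_matrix (policy_chain n lam Phi)"
proof -
  define c where "c i = lam i / (\<Sum>k\<in>{1..n}. lam k)" for i
  have "0 < (\<Sum>k\<in>{1..n}. lam k)" using assms by (intro sum_pos) auto
  then have c: "\<And>i. i \<in> {1..n} \<Longrightarrow> 0 \<le> c i" "(\<Sum>i\<in>{1..n}. c i) = 1"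
    using lam by (auto simp: c_def sum_divide_distrib[symmetric] less_imp_le)
  have P: "policy_chain n lam Phi s = (\<lambda>y. (\<Sum>i\<in>{1..n}. c i * arrival_kernel n Phi s i y) * 1)" for s
    by (simp add: fun_eq_iff policy_chain_arrival_kernel c_def)
  have "((\<lambda>y. (\<Sum>i\<in>{1..n}. c i * arrival_kernel n Phi s i y) * 1) has_sum (\<Sum>i\<in>{1..n}. c i * 1)) UNIV" for s
    by (rule has_sum_weighted_kernels) (simp_all add: arrival_kernel_has_sum)
  then show ?thesis
    unfolding stochastic_matrix_def P
    using c arrival_kernel_nonneg by (auto intro!: sum_nonneg mult_nonneg_nonneg)
qed

lemma policy_chain_pos_imp_arrival:
  assumes "0 < policy_chain n lam Phi s s'" and lam: "\<forall>i\<in>{1..n}. lam i > 0"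
  shows "\<exists>i\<in>{1..n}. 0 < arrival_kernel n Phi s i s'"
proof (rule ccontr)
  assume none: "\<not> ?thesis"
  have "arrival_kernel n Phi s i s' = 0" if "i \<in> {1..n}" for i
    using that none arrival_kernel_nonneg[of s i s'] by force
  then have "policy_chain n lam Phi s s' = 0"
    by (simp add: policy_chain_arrival_kernel)
  with assms(1) show False by simp
qed

lemma queue_total_step:
  assumes "i \<in> {1..n}" "0 < arrival_kernel n Phi s i s'"
  shows "queue_total n (sz s') \<le> queue_total n (sz s) + 1"
  using arrival_kernel_pos_cases[OF assms]
proof
  assume "sz s' = (sz s)(i := sz s i + 1)"
  then show ?thesis
    using sum_fun_upd_add[of "{1..n}" i "sz s" "sz s i + 1"] assms(1) by (simp add: queue_total_def)
next
  assume "\<exists>j\<in>nbrs E i. 1 \<le> sz s j \<and> sz s' = (sz s)(j := sz s j - 1)"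
  then have "\<forall>k. sz s' k \<le> sz s k" by auto
  then show ?thesis unfolding queue_total_def by (meson le_add1 order_trans sum_mono)
qed

end

lemma summable_on_bounded_on_support:
  fixes p h :: "nat \<Rightarrow> real"
  assumes p: "(p has_sum 1) UNIV" "\<And>y. 0 \<le> p y" and h: "\<And>y. 0 < p y \<Longrightarrow> 0 \<le> h y \<and> h y \<le> B"
  shows "(\<lambda>y. p y * h y) summable_on UNIV"
proof (rule summable_on_comparison_test[OF summable_on_cmult_left[OF has_sum_imp_summable[OF p(1)]]])
  fix y
  show "p y * h y \<le> p y * B" "0 \<le> p y * h y"
    using h[of y] p(2)[of y] by (cases "p y = 0"; auto intro: mult_left_mono)+
qed

lemma infsum_ge_on_support:
  fixes p h :: "nat \<Rightarrow> real"
  assumes p: "(p has_sum 1) UNIV" "\<And>y. 0 \<le> p y" and "(\<lambda>y. p y * h y) summable_on UNIV"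
    and h: "\<And>y. 0 < p y \<Longrightarrow> g \<le> h y"
  shows "g \<le> (\<Sum>\<^sub>\<infinity>y. p y * h y)"
proof -
  have "((\<lambda>y. p y * g) has_sum g) UNIV" using has_sum_cmult_left[OF p(1), of g] by simp
  then show ?thesis
  proof (rule has_sum_mono[OF _ has_sum_infsum[OF assms(3)]])
    fix y
    show "p y * g \<le> p y * h y"
      using h[of y] p(2)[of y] by (cases "p y = 0") (auto intro: mult_left_mono)
  qed
qed

lemma max_0_le_convex_combination:
  fixes c d :: "'a \<Rightarrow> real"
  assumes "finite A" "\<And>i. i \<in> A \<Longrightarrow> 0 \<le> c i" "(\<Sum>i\<in>A. c i) = 1" "0 \<le> (\<Sum>i\<in>A. c i * d i)"
  shows "max 0 X \<le> (\<Sum>i\<in>A. c i * max 0 (X + d i))"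
proof -
  have "X \<le> (\<Sum>i\<in>A. c i * (X + d i))"
    using assms(3,4) by (simp add: distrib_left sum.distrib sum_distrib_right[symmetric])
  also have "\<dots> \<le> (\<Sum>i\<in>A. c i * max 0 (X + d i))"
    using assms(2) by (intro sum_mono mult_left_mono) auto
  finally show ?thesis
    using assms(2) by (auto intro!: sum_nonneg mult_nonneg_nonneg)
qed

lemma sum_comp_fun_upd:
  fixes g :: "'b \<Rightarrow> real"
  assumes "finite A"
  shows "(\<Sum>k\<in>A. g ((x(j := v)) k)) = (\<Sum>k\<in>A. g (x k)) + (if j \<in> A then g v - g (x j) else 0)"
proof -
  have "(\<Sum>k\<in>A. g ((x(j := v)) k)) = sum ((\<lambda>k. g (x k))(j := g v)) A"
    by (intro sum.cong) auto
  also have "\<dots> = (\<Sum>k\<in>A. g (x k)) + (if j \<in> A then g v - g (x j) else 0)"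
    by (rule sum_fun_upd_real[OF assms])
  finally show ?thesis .
qed

definition imbalance :: "nat set \<Rightarrow> nat set \<Rightarrow> (nat \<Rightarrow> nat) \<Rightarrow> real" where
  "imbalance I J x = (\<Sum>k\<in>I. real (x k)) - (\<Sum>k\<in>J. real (x k))"

lemma imbalance_le_queue_total:
  assumes "I \<subseteq> {1..n}"
  shows "imbalance I J x \<le> real (queue_total n x)"
proof -
  have "imbalance I J x \<le> (\<Sum>k\<in>I. real (x k))" by (simp add: imbalance_def sum_nonneg)
  also have "\<dots> \<le> (\<Sum>k\<in>{1..n}. real (x k))" by (rule sum_mono2) (use assms in auto)
  finally show ?thesis by (simp add: queue_total_def)
qed

lemma imbalance_arrival_step:
  assumes sg: "simple_graph n E" and ind: "independent_set n E I" and J: "J = (\<Union>k\<in>I. nbrs E k)"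
    and move: "x' = x(i := x i + 1) \<or> (\<exists>j\<in>nbrs E i. 1 \<le> x j \<and> x' = x(j := x j - 1))"
  shows "imbalance I J x + of_bool (i \<in> I) - of_bool (i \<in> J) \<le> imbalance I J x'"
proof -
  have "I \<subseteq> {1..n}" "J \<subseteq> {1..n}"
    using ind simple_graph_nbrs(1)[OF sg] by (auto simp: independent_set_def J)
  then have fin: "finite I" "finite J" by (auto intro: finite_subset)
  have disj: "I \<inter> J = {}" using independent_set_disjoint_nbrs[OF ind] J by simp
  from move show ?thesis
  proof
    assume x': "x' = x(i := x i + 1)"
    show ?thesis
      unfolding x' imbalance_def sum_comp_fun_upd[OF fin(1)] sum_comp_fun_upd[OF fin(2)] by simp
  next
    assume "\<exists>j\<in>nbrs E i. 1 \<le> x j \<and> x' = x(j := x j - 1)"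
    then obtain j where j: "j \<in> nbrs E i" "1 \<le> x j" and x': "x' = x(j := x j - 1)" by blast
    have "imbalance I J x' = imbalance I J x - of_bool (j \<in> I) + of_bool (j \<in> J)"
      using j(2) unfolding x' imbalance_def sum_comp_fun_upd[OF fin(1)] sum_comp_fun_upd[OF fin(2)]
      by (simp add: of_nat_diff)
    moreover have "j \<in> J" if "i \<in> I" using that j(1) J by auto
    moreover have "j \<notin> I" if "i \<notin> J" using that j(1) J nbrs_sym by blast
    ultimately show ?thesis using disj by auto
  qed
qed

lemma sum_mult_indicator_diff:
  fixes c :: "'a \<Rightarrow> real"
  assumes "finite A" "I \<subseteq> A" "J \<subseteq> A"
  shows "(\<Sum>i\<in>A. c i * (of_bool (i \<in> I) - of_bool (i \<in> J))) = sum c I - sum c J"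
  using assms by (simp add: right_diff_distrib sum_subtractf Int_absorb1)

lemma policy_chain_expectation_ge:
  assumes mp: "matching_policy n E sz s0 Phi" and lam: "\<forall>i\<in>{1..n}. 0 \<le> lam i"
    and h: "\<And>i y. i \<in> {1..n} \<Longrightarrow> 0 < arrival_kernel n Phi s i y \<Longrightarrow> g i \<le> h y \<and> 0 \<le> h y \<and> h y \<le> B"
  obtains Ph where "((\<lambda>y. policy_chain n lam Phi s y * h y) has_sum Ph) UNIV"
    "(\<Sum>i\<in>{1..n}. lam i / (\<Sum>k\<in>{1..n}. lam k) * g i) \<le> Ph"
proof -
  define c where "c i = lam i / (\<Sum>k\<in>{1..n}. lam k)" for i
  define r where "r = arrival_kernel n Phi s"
  have r: "\<And>i. i \<in> {1..n} \<Longrightarrow> (r i has_sum 1) UNIV" "\<And>i y. 0 \<le> r i y"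
    by (simp_all add: r_def arrival_kernel_has_sum[OF mp] arrival_kernel_nonneg[OF mp])
  have summable: "(\<lambda>y. r i y * h y) summable_on UNIV" if "i \<in> {1..n}" for i
    using h[OF that] by (intro summable_on_bounded_on_support[OF r(1)[OF that] r(2), where B=B]) (simp add: r_def)
  have "((\<lambda>y. (\<Sum>i\<in>{1..n}. c i * r i y) * h y) has_sum (\<Sum>i\<in>{1..n}. c i * (\<Sum>\<^sub>\<infinity>y. r i y * h y))) UNIV"
    by (rule has_sum_weighted_kernels) (simp_all add: has_sum_infsum summable)
  moreover have "(\<Sum>i\<in>{1..n}. c i * g i) \<le> (\<Sum>i\<in>{1..n}. c i * (\<Sum>\<^sub>\<infinity>y. r i y * h y))"
  proof (intro sum_mono mult_left_mono)
    fix i assume i: "i \<in> {1..n}"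
    show "0 \<le> c i" unfolding c_def using lam i by (intro divide_nonneg_nonneg sum_nonneg) auto
    show "g i \<le> (\<Sum>\<^sub>\<infinity>y. r i y * h y)"
      by (rule infsum_ge_on_support[OF r(1)[OF i] r(2) summable[OF i]]) (use h[OF i] in \<open>simp add: r_def\<close>)
  qed
  ultimately show ?thesis
    using that by (simp add: policy_chain_arrival_kernel c_def r_def)
qed

lemma imbalance_submartingale:
  assumes n: "n \<ge> 1" and sg: "simple_graph n E" and lam: "\<forall>i\<in>{1..n}. lam i > 0"
    and mp: "matching_policy n E sz s0 Phi" and ind: "independent_set n E I"
    and violated: "(\<Sum>i\<in>(\<Union>k\<in>I. nbrs E k). lam i) \<le> (\<Sum>i\<in>I. lam i)"
  defines "f \<equiv> \<lambda>s. max 0 (imbalance I (\<Union>k\<in>I. nbrs E k) (sz s))"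
  obtains Pf where "\<And>s. ((\<lambda>y. policy_chain n lam Phi s y * f y) has_sum Pf s) UNIV"
    "\<And>s. f s \<le> Pf s" "0 < Pf s0"
proof -
  define J where "J = (\<Union>k\<in>I. nbrs E k)"
  define c where "c i = lam i / (\<Sum>k\<in>{1..n}. lam k)" for i
  define d where "d i = (of_bool (i \<in> I) - of_bool (i \<in> J) :: real)" for i
  have I: "I \<subseteq> {1..n}" "I \<noteq> {}" and J: "J \<subseteq> {1..n}"
    using ind simple_graph_nbrs(1)[OF sg] by (auto simp: independent_set_def J_def)
  have L: "0 < (\<Sum>k\<in>{1..n}. lam k)" using n lam by (intro sum_pos) auto
  then have c: "\<And>i. i \<in> {1..n} \<Longrightarrow> 0 < c i" "(\<Sum>i\<in>{1..n}. c i) = 1"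
    using lam by (auto simp: c_def sum_divide_distrib[symmetric])
  have "(\<Sum>i\<in>{1..n}. c i * d i) = ((\<Sum>i\<in>I. lam i) - (\<Sum>i\<in>J. lam i)) / (\<Sum>k\<in>{1..n}. lam k)"
    using I(1) J by (simp add: d_def sum_mult_indicator_diff c_def sum_divide_distrib[symmetric] diff_divide_distrib)
  then have drift: "0 \<le> (\<Sum>i\<in>{1..n}. c i * d i)"
    using violated L by (simp add: J_def)
  have "\<exists>Pf. ((\<lambda>y. policy_chain n lam Phi s y * f y) has_sum Pf) UNIV
      \<and> (\<Sum>i\<in>{1..n}. c i * max 0 (imbalance I J (sz s) + d i)) \<le> Pf" for s
  proof -
    have bounds: "max 0 (imbalance I J (sz s) + d i) \<le> f y \<and> 0 \<le> f y \<and> f y \<le> real (queue_total n (sz s)) + 1"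
      if "i \<in> {1..n}" "0 < arrival_kernel n Phi s i y" for i y
    proof -
      have "real (queue_total n (sz y)) \<le> real (queue_total n (sz s) + 1)"
        using queue_total_step[OF mp that] by (simp only: of_nat_le_iff)
      then show ?thesis
        using imbalance_arrival_step[OF sg ind J_def arrival_kernel_pos_cases[OF mp that]]
          imbalance_le_queue_total[OF I(1), of J "sz y"] by (auto simp: f_def J_def d_def)
    qed
    have "\<forall>i\<in>{1..n}. 0 \<le> lam i" using lam by auto
    from policy_chain_expectation_ge[where s=s and h=f and B="real (queue_total n (sz s)) + 1"
        and g="\<lambda>i. max 0 (imbalance I J (sz s) + d i)", OF mp this bounds]
    show ?thesis by (auto simp: c_def)
  qed
  then obtain Pf where Pf: "\<And>s. ((\<lambda>y. policy_chain n lam Phi s y * f y) has_sum Pf s) UNIV"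
    and Pf_ge: "\<And>s. (\<Sum>i\<in>{1..n}. c i * max 0 (imbalance I J (sz s) + d i)) \<le> Pf s"
    by metis
  have "f s \<le> Pf s" for s
    using max_0_le_convex_combination[OF finite_atLeastAtMost less_imp_le[OF c(1)] c(2) drift]
      Pf_ge[of s] unfolding f_def J_def by (meson order_trans)
  moreover have "0 < Pf s0"
  proof -
    have "sz s0 = (\<lambda>_. 0)" using mp by (simp add: matching_policy_def)
    then have "imbalance I J (sz s0) = 0" by (simp add: imbalance_def)
    moreover obtain i0 where i0: "i0 \<in> I" using I by blast
    moreover from i0 have "i0 \<notin> J" using independent_set_disjoint_nbrs[OF ind] by (auto simp: J_def)
    ultimately have "0 < (\<Sum>i\<in>{1..n}. c i * max 0 (imbalance I J (sz s0) + d i))"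
      using I(1) c(1) by (intro sum_pos2[of _ i0]) (auto simp: d_def intro: mult_nonneg_nonneg less_imp_le)
    then show ?thesis using Pf_ge[of s0] by linarith
  qed
  ultimately show ?thesis using that[OF Pf] by blast
qed

text \<open>A positive recurrent chain admits no such submartingale, since it is bounded by the total
  number of waiting items, which grows by at most one per step.\<close>

lemma positive_recurrent_imp_independent_set_strict:
  assumes n: "n \<ge> 1" and sg: "simple_graph n E" and lam: "\<forall>i\<in>{1..n}. lam i > 0"
    and mp: "matching_policy n E sz s0 Phi" and pr: "positive_recurrent (policy_chain n lam Phi)"
    and ind: "independent_set n E I"
  shows "(\<Sum>i\<in>I. lam i) < (\<Sum>i\<in>(\<Union>k\<in>I. nbrs E k). lam i)"
proof (rule ccontr)
  define P where "P = policy_chain n lam Phi"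
  define t where "t s = queue_total n (sz s)" for s
  define f where "f = (\<lambda>s. max 0 (imbalance I (\<Union>k\<in>I. nbrs E k) (sz s)))"
  assume "\<not> ?thesis"
  then have "(\<Sum>i\<in>(\<Union>k\<in>I. nbrs E k). lam i) \<le> (\<Sum>i\<in>I. lam i)" by simp
  then obtain Pf where Pf: "\<And>s. ((\<lambda>y. P s y * f y) has_sum Pf s) UNIV"
    and sub: "\<And>s. f s \<le> Pf s" and strict: "0 < Pf s0"
    using imbalance_submartingale[OF n sg lam mp ind] unfolding P_def f_def by blast
  have I: "I \<subseteq> {1..n}" using ind by (simp add: independent_set_def)
  have f_le: "f s \<le> real (t s)" for s
    using imbalance_le_queue_total[OF I] by (simp add: f_def t_def)
  have "sz s0 = (\<lambda>_. 0)" using mp by (simp add: matching_policy_def)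
  then have f0: "f s0 = 0" and t0: "t s0 = 0"
    by (simp_all add: f_def t_def queue_total_def imbalance_def)
  have t_step: "t y \<le> t x + 1" if "0 < P x y" for x y
    using policy_chain_pos_imp_arrival[OF mp that[unfolded P_def] lam] queue_total_step[OF mp]
    by (auto simp: t_def)
  have "positive_recurrent_state P s0"
    using pr by (simp add: P_def positive_recurrent_def)
  from positive_recurrent_no_submartingale[OF stochastic_policy_chain[OF mp n lam, folded P_def] this
      _ f0 f_le t0 t_step Pf sub strict]
  show False by (simp add: f_def)
qed

section \<open>Stability of match-the-longest\<close>

text \<open>Count vectors that can be left unmatched: compatible items are always matched, so the
  classes with waiting items form an independent set.\<close>

definition admissible_counts :: "nat \<Rightarrow> nat set set \<Rightarrow> (nat \<Rightarrow> nat) set" where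
  "admissible_counts n E =
     {x. (\<forall>k. k \<notin> {1..n} \<longrightarrow> x k = 0) \<and> (\<forall>i j. 1 \<le> x i \<longrightarrow> 1 \<le> x j \<longrightarrow> {i, j} \<notin> E)}"

text \<open>States are natural numbers, in bijection with the countably infinite set of admissible
  count vectors.\<close>

definition counts_of :: "nat \<Rightarrow> nat set set \<Rightarrow> nat \<Rightarrow> (nat \<Rightarrow> nat)" where
  "counts_of n E = from_nat_into (admissible_counts n E)"

definition state_of :: "nat \<Rightarrow> nat set set \<Rightarrow> (nat \<Rightarrow> nat) \<Rightarrow> nat" where
  "state_of n E = to_nat_on (admissible_counts n E)"

definition longest_nbr_queue :: "nat set set \<Rightarrow> (nat \<Rightarrow> nat) \<Rightarrow> nat \<Rightarrow> nat" where
  "longest_nbr_queue E x i = Max (insert 0 (x ` nbrs E i))"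

definition longest_nbr :: "nat set set \<Rightarrow> (nat \<Rightarrow> nat) \<Rightarrow> nat \<Rightarrow> nat" where
  "longest_nbr E x i = (SOME j. j \<in> nbrs E i \<and> x j = longest_nbr_queue E x i)"

definition ml_partner :: "nat set set \<Rightarrow> (nat \<Rightarrow> nat) \<Rightarrow> nat \<Rightarrow> nat option" where
  "ml_partner E x i = (if longest_nbr_queue E x i = 0 then None else Some (longest_nbr E x i))"

definition ml_counts :: "nat set set \<Rightarrow> (nat \<Rightarrow> nat) \<Rightarrow> nat \<Rightarrow> (nat \<Rightarrow> nat)" where
  "ml_counts E x i = (case ml_partner E x i of None \<Rightarrow> x(i := x i + 1) | Some j \<Rightarrow> x(j := x j - 1))"

definition ml_next :: "nat \<Rightarrow> nat set set \<Rightarrow> nat \<Rightarrow> nat \<Rightarrow> nat" where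
  "ml_next n E s i = state_of n E (ml_counts E (counts_of n E s) i)"

definition ml_policy :: "nat \<Rightarrow> nat set set \<Rightarrow> nat \<Rightarrow> nat \<Rightarrow> nat option \<Rightarrow> nat \<Rightarrow> real" where
  "ml_policy n E s i j s' = of_bool (j = ml_partner E (counts_of n E s) i \<and> s' = ml_next n E s i)"

lemma countable_admissible_counts: "countable (admissible_counts n E)"
proof (rule countable_image_inj_on)
  show "countable ((\<lambda>x. map x [0..<Suc n]) ` admissible_counts n E)"
    by (rule countable_subset[of _ UNIV]) auto
  show "inj_on (\<lambda>x. map x [0..<Suc n]) (admissible_counts n E)"
  proof (rule inj_onI, rule ext)
    fix x y k
    assume "x \<in> admissible_counts n E" "y \<in> admissible_counts n E" "map x [0..<Suc n] = map y [0..<Suc n]"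
    then show "x k = y k"
      by (cases "k \<in> {1..n}") (auto simp: admissible_counts_def map_eq_conv)
  qed
qed

lemma zero_in_admissible_counts: "(\<lambda>_. 0) \<in> admissible_counts n E"
  by (simp add: admissible_counts_def)

lemma admissible_counts_le:
  assumes "x \<in> admissible_counts n E" "\<And>k. y k \<le> x k"
  shows "y \<in> admissible_counts n E"
proof -
  have "1 \<le> x k" if "1 \<le> y k" for k using that assms(2)[of k] by linarith
  moreover have "y k = 0" if "x k = 0" for k using that assms(2)[of k] by simp
  ultimately show ?thesis using assms(1) unfolding admissible_counts_def by blast
qed

lemma admissible_counts_independent:
  "x \<in> admissible_counts n E \<Longrightarrow> 1 \<le> x i \<Longrightarrow> 1 \<le> x j \<Longrightarrow> {i, j} \<notin> E"
  by (simp add: admissible_counts_def)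

lemma counts_of_in: "counts_of n E s \<in> admissible_counts n E"
  unfolding counts_of_def by (rule from_nat_into) (use zero_in_admissible_counts in auto)

lemma counts_of_state_of: "x \<in> admissible_counts n E \<Longrightarrow> counts_of n E (state_of n E x) = x"
  by (simp add: counts_of_def state_of_def countable_admissible_counts)

lemma queue_total_eq_0_iff:
  "x \<in> admissible_counts n E \<Longrightarrow> queue_total n x = 0 \<longleftrightarrow> x = (\<lambda>_. 0)"
  by (auto simp: queue_total_def admissible_counts_def fun_eq_iff)

lemma queue_total_pos:
  assumes "queue_total n x \<noteq> 0"
  obtains k where "k \<in> {1..n}" "1 \<le> x k"
  using assms by (auto simp: queue_total_def Suc_le_eq)

lemma queue_total_decrement:
  assumes "k \<in> {1..n}" "1 \<le> x k"
  shows "queue_total n (x(k := x k - 1)) + 1 = queue_total n x"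
  using sum_fun_upd_add[of "{1..n}" k x "x k - 1"] assms by (simp add: queue_total_def)

context
  fixes n :: nat and E :: "nat set set"
  assumes n: "n \<ge> 1" and sg: "simple_graph n E"
begin

lemma infinite_admissible_counts: "infinite (admissible_counts n E)"
proof -
  define f where "f m = (\<lambda>k::nat. if k = 1 then m else (0::nat))" for m
  have "inj f" by (rule injI) (metis f_def)
  moreover have "range f \<subseteq> admissible_counts n E"
    using n simple_graph_no_loop[OF sg, of 1] by (auto simp: admissible_counts_def f_def split: if_splits)
  ultimately show ?thesis using range_inj_infinite infinite_super by blast
qed

lemma state_of_counts_of: "state_of n E (counts_of n E s) = s"
  by (simp add: counts_of_def state_of_def countable_admissible_counts infinite_admissible_counts)

lemma longest_nbr_queue_ge: "j \<in> nbrs E i \<Longrightarrow> x j \<le> longest_nbr_queue E x i"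
  unfolding longest_nbr_queue_def by (rule Max_ge) (auto simp: simple_graph_finite_nbrs[OF sg])

lemma longest_nbr_queue_eq_0_iff: "longest_nbr_queue E x i = 0 \<longleftrightarrow> (\<forall>j\<in>nbrs E i. x j = 0)"
proof -
  have "longest_nbr_queue E x i \<in> insert 0 (x ` nbrs E i)"
    unfolding longest_nbr_queue_def by (rule Max_in) (auto simp: simple_graph_finite_nbrs[OF sg])
  then show ?thesis using longest_nbr_queue_ge[of _ i x] by fastforce
qed

lemma longest_nbr:
  assumes "longest_nbr_queue E x i \<noteq> 0"
  shows "longest_nbr E x i \<in> nbrs E i" "x (longest_nbr E x i) = longest_nbr_queue E x i"
proof -
  have "longest_nbr_queue E x i \<in> insert 0 (x ` nbrs E i)"
    unfolding longest_nbr_queue_def by (rule Max_in) (auto simp: simple_graph_finite_nbrs[OF sg])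
  then have "\<exists>j. j \<in> nbrs E i \<and> x j = longest_nbr_queue E x i" using assms by auto
  from someI_ex[OF this] show "longest_nbr E x i \<in> nbrs E i" "x (longest_nbr E x i) = longest_nbr_queue E x i"
    by (simp_all add: longest_nbr_def)
qed

lemma ml_partner_SomeD:
  assumes "ml_partner E x i = Some j"
  shows "j \<in> nbrs E i" "1 \<le> x j" "x j = longest_nbr_queue E x i"
proof -
  have ne: "longest_nbr_queue E x i \<noteq> 0" and j: "j = longest_nbr E x i"
    using assms by (simp_all add: ml_partner_def split: if_splits)
  show "j \<in> nbrs E i" using longest_nbr(1)[OF ne] j by simp
  show eq: "x j = longest_nbr_queue E x i" using longest_nbr(2)[OF ne] j by simp
  show "1 \<le> x j" using ne eq by simp
qed

lemma ml_counts_cases: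
  obtains "ml_counts E x i = x(i := x i + 1)" "\<forall>j\<in>nbrs E i. x j = 0"
  | j where "j \<in> nbrs E i" "1 \<le> x j" "ml_counts E x i = x(j := x j - 1)"
      "x j = longest_nbr_queue E x i"
proof (cases "ml_partner E x i")
  case None
  then have "longest_nbr_queue E x i = 0" by (simp add: ml_partner_def split: if_splits)
  with None that(1) show ?thesis by (simp add: ml_counts_def longest_nbr_queue_eq_0_iff)
next
  case (Some j)
  with ml_partner_SomeD[OF Some] that(2) show ?thesis by (simp add: ml_counts_def)
qed

lemma admissible_counts_increment:
  assumes x: "x \<in> admissible_counts n E" and i: "i \<in> {1..n}" and free: "\<forall>j\<in>nbrs E i. x j = 0"
  shows "x(i := x i + 1) \<in> admissible_counts n E"
  unfolding admissible_counts_def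
proof (intro CollectI conjI allI impI)
  fix k assume "k \<notin> {1..n}"
  then show "(x(i := x i + 1)) k = 0" using x i by (auto simp: admissible_counts_def)
next
  fix a b assume a: "1 \<le> (x(i := x i + 1)) a" and b: "1 \<le> (x(i := x i + 1)) b"
  have "b \<notin> nbrs E i" if "b \<noteq> i" using b that free by auto
  moreover have "a \<notin> nbrs E i" if "a \<noteq> i" using a that free by auto
  moreover have "{a, b} \<notin> E" if "a \<noteq> i" "b \<noteq> i"
    using a b that admissible_counts_independent[OF x] by simp
  ultimately show "{a, b} \<notin> E"
    using simple_graph_no_loop[OF sg, of i]
    by (cases "a = i"; cases "b = i") (auto simp: nbrs_def insert_commute)
qed

lemma ml_counts_admissible:
  assumes x: "x \<in> admissible_counts n E" and i: "i \<in> {1..n}"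
  shows "ml_counts E x i \<in> admissible_counts n E"
proof (cases rule: ml_counts_cases[of x i])
  case 1
  then show ?thesis using admissible_counts_increment[OF x i] by simp
next
  case (2 j)
  then show ?thesis by (auto intro: admissible_counts_le[OF x])
qed

lemma counts_of_ml_next: "i \<in> {1..n} \<Longrightarrow> counts_of n E (ml_next n E s i) = ml_counts E (counts_of n E s) i"
  unfolding ml_next_def by (rule counts_of_state_of[OF ml_counts_admissible[OF counts_of_in]])

lemma ml_policy_row:
  assumes "i \<in> {1..n}"
  shows "ml_policy n E s i None s' + (\<Sum>j\<in>{1..n}. ml_policy n E s i (Some j) s') = of_bool (s' = ml_next n E s i)"
proof (cases "ml_partner E (counts_of n E s) i")
  case (Some j0)
  then have "j0 \<in> {1..n}" using ml_partner_SomeD(1) simple_graph_nbrs(1)[OF sg] by blast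
  then show ?thesis using Some by (simp add: ml_policy_def of_bool_def sum.delta' if_distrib cong: if_cong)
qed (simp add: ml_policy_def)

lemma matching_policy_ml: "matching_policy n E (counts_of n E) (state_of n E (\<lambda>_. 0)) (ml_policy n E)"
  unfolding matching_policy_def
proof (intro conjI allI impI)
  show "counts_of n E s k = 0" if "k \<notin> {1..n}" for s k
    using counts_of_in[of n E s] that by (simp add: admissible_counts_def)
  show "(counts_of n E s = (\<lambda>_. 0)) = (s = state_of n E (\<lambda>_. 0))" for s
    using state_of_counts_of[of s] counts_of_state_of[OF zero_in_admissible_counts] by auto
  show "((\<lambda>s'. ml_policy n E s i None s' + (\<Sum>j\<in>{1..n}. ml_policy n E s i (Some j) s')) has_sum 1) UNIV"
    if "i \<in> {1..n}" for s i
  proof -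
    have "(\<lambda>s'. ml_policy n E s i None s' + (\<Sum>j\<in>{1..n}. ml_policy n E s i (Some j) s'))
        = (\<lambda>s'. if s' = ml_next n E s i then 1 else 0)"
      using ml_policy_row[OF that] by (simp add: fun_eq_iff)
    then show ?thesis using has_sum_indicator_point[of "ml_next n E s i" 1] by simp
  qed
  fix s i j s' assume i: "i \<in> {1..n}" and "0 < ml_policy n E s i j s'"
  then have j: "j = ml_partner E (counts_of n E s) i" and s': "s' = ml_next n E s i"
    by (auto simp: ml_policy_def)
  show "j = None \<and> counts_of n E s' = (counts_of n E s)(i := counts_of n E s i + 1) \<or>
        (\<exists>j'. j = Some j' \<and> j' \<in> nbrs E i \<and> 1 \<le> counts_of n E s j'
           \<and> counts_of n E s' = (counts_of n E s)(j' := counts_of n E s j' - 1))"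
    using ml_partner_SomeD[of "counts_of n E s" i]
    by (cases j) (auto simp: j s' counts_of_ml_next[OF i] ml_counts_def)
qed (simp add: ml_policy_def)

end

context
  fixes n :: nat and E :: "nat set set" and lam :: "nat \<Rightarrow> real"
  assumes n: "n \<ge> 1" and sg: "simple_graph n E" and lam: "\<forall>i\<in>{1..n}. lam i > 0"
begin

lemma policy_chain_ml:
  "policy_chain n lam (ml_policy n E) s y
     = (\<Sum>i\<in>{1..n}. lam i / (\<Sum>k\<in>{1..n}. lam k) * of_bool (y = ml_next n E s i))"
  unfolding policy_chain_def
proof (intro sum.cong refl)
  fix i assume "i \<in> {1..n}"
  then show "lam i / (\<Sum>k\<in>{1..n}. lam k) * (ml_policy n E s i None y + (\<Sum>j\<in>{1..n}. ml_policy n E s i (Some j) y))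
      = lam i / (\<Sum>k\<in>{1..n}. lam k) * of_bool (y = ml_next n E s i)"
    by (simp only: ml_policy_row[OF n sg])
qed

lemma policy_chain_ml_pos:
  assumes i: "i \<in> {1..n}"
  shows "0 < policy_chain n lam (ml_policy n E) s (ml_next n E s i)"
proof -
  have "0 < (\<Sum>k\<in>{1..n}. lam k)" using i lam by (intro sum_pos) auto
  then show ?thesis
    unfolding policy_chain_ml using i lam
    by (intro sum_pos2[of _ i]) (auto intro!: divide_nonneg_pos less_imp_le)
qed

lemma ml_reaches_empty:
  assumes surj: "surjective_graph n E"
  shows "(\<lambda>a b. 0 < policy_chain n lam (ml_policy n E) a b)\<^sup>*\<^sup>* s (state_of n E (\<lambda>_. 0))"
proof (induction "queue_total n (counts_of n E s)" arbitrary: s)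
  case 0
  then have "counts_of n E s = (\<lambda>_. 0)" using queue_total_eq_0_iff[OF counts_of_in] by metis
  then show ?case using state_of_counts_of[OF n sg, of s] by simp
next
  case (Suc m)
  define x where "x = counts_of n E s"
  obtain k where k: "k \<in> {1..n}" "1 \<le> x k"
    using queue_total_pos[of n x] Suc.hyps(2) by (auto simp: x_def)
  obtain i where "i \<in> nbrs E k" using surjective_graph_nbrs_nonempty[OF sg surj k(1)] by blast
  then have i: "i \<in> {1..n}" "k \<in> nbrs E i" using simple_graph_nbrs(1)[OF sg] nbrs_sym by blast+
  have "longest_nbr_queue E x i \<noteq> 0" using longest_nbr_queue_ge[OF n sg i(2), of x] k(2) by linarith
  then obtain j where j: "j \<in> nbrs E i" "1 \<le> x j" "ml_counts E x i = x(j := x j - 1)"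
    by (cases rule: ml_counts_cases[OF n sg, of x i]) (auto simp: longest_nbr_queue_eq_0_iff[OF n sg])
  have "queue_total n (counts_of n E (ml_next n E s i)) = m"
    using queue_total_decrement[of j n x] j Suc.hyps(2) simple_graph_nbrs(1)[OF sg]
    by (simp add: counts_of_ml_next[OF n sg i(1)] x_def)
  then show ?case
    using Suc.hyps(1) policy_chain_ml_pos[OF i(1)] by (blast intro: converse_rtranclp_into_rtranclp)
qed

lemma ml_reachable_from_empty:
  "(\<lambda>a b. 0 < policy_chain n lam (ml_policy n E) a b)\<^sup>*\<^sup>* (state_of n E (\<lambda>_. 0)) s"
proof (induction "queue_total n (counts_of n E s)" arbitrary: s)
  case 0
  then have "counts_of n E s = (\<lambda>_. 0)" using queue_total_eq_0_iff[OF counts_of_in] by metis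
  then show ?case using state_of_counts_of[OF n sg, of s] by simp
next
  case (Suc m)
  define x where "x = counts_of n E s"
  have x: "x \<in> admissible_counts n E" by (simp add: x_def counts_of_in)
  obtain k where k: "k \<in> {1..n}" "1 \<le> x k"
    using queue_total_pos[of n x] Suc.hyps(2) by (auto simp: x_def)
  define y where "y = x(k := x k - 1)"
  have y: "y \<in> admissible_counts n E" by (rule admissible_counts_le[OF x]) (simp add: y_def)
  have "queue_total n y = m"
    using queue_total_decrement[of k n x, OF k] Suc.hyps(2) by (simp add: y_def x_def)
  then have reach_y: "(\<lambda>a b. 0 < policy_chain n lam (ml_policy n E) a b)\<^sup>*\<^sup>* (state_of n E (\<lambda>_. 0)) (state_of n E y)"
    using Suc.hyps(1)[of "state_of n E y"] counts_of_state_of[OF y] by simp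
  have "y j = 0" if "j \<in> nbrs E k" for j
  proof -
    have "\<not> 1 \<le> x j" using that admissible_counts_independent[OF x k(2), of j] by (auto simp: nbrs_def)
    then show ?thesis using simple_graph_nbrs(3)[OF sg that] by (simp add: y_def)
  qed
  then have "ml_counts E y k = x"
    using k(2) by (cases rule: ml_counts_cases[OF n sg, of y k]) (auto simp: y_def)
  then have "ml_next n E (state_of n E y) k = s"
    by (simp add: ml_next_def counts_of_state_of[OF y] x_def state_of_counts_of[OF n sg])
  then show ?case
    using reach_y policy_chain_ml_pos[OF k(1), of "state_of n E y"] by (metis rtranclp.rtrancl_into_rtrancl)
qed

lemma irreducible_ml:
  assumes "surjective_graph n E"
  shows "irreducible (policy_chain n lam (ml_policy n E))"
  unfolding irreducible_def
  using ml_reaches_empty[OF assms] ml_reachable_from_empty by (blast intro: rtranclp_trans)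

end

lemma sum_weighted_eq_sum_level_sets:
  fixes w :: "'a \<Rightarrow> real" and a :: "'a \<Rightarrow> nat"
  assumes "finite A" "\<And>i. i \<in> A \<Longrightarrow> a i \<le> K"
  shows "(\<Sum>i\<in>A. w i * real (a i)) = (\<Sum>t\<in>{1..K}. \<Sum>i\<in>{i\<in>A. t \<le> a i}. w i)"
proof -
  have "real (a i) = (\<Sum>t\<in>{1..K}. of_bool (t \<le> a i))" if "i \<in> A" for i
  proof -
    have "{1..K} \<inter> {t. t \<le> a i} = {1..a i}" using assms(2)[OF that] by auto
    then show ?thesis by simp
  qed
  then have "(\<Sum>i\<in>A. w i * real (a i)) = (\<Sum>i\<in>A. \<Sum>t\<in>{1..K}. w i * of_bool (t \<le> a i))"
    by (intro sum.cong refl) (simp only: sum_distrib_left)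
  also have "\<dots> = (\<Sum>t\<in>{1..K}. \<Sum>i\<in>A. w i * of_bool (t \<le> a i))"
    by (rule sum.swap)
  also have "\<dots> = (\<Sum>t\<in>{1..K}. \<Sum>i\<in>{i\<in>A. t \<le> a i}. w i)"
    using assms(1) by (simp add: Collect_conj_eq Int_commute)
  finally show ?thesis .
qed

lemma exists_uniform_margin:
  fixes lam :: "nat \<Rightarrow> real"
  assumes "\<forall>I. independent_set n E I \<longrightarrow> (\<Sum>i\<in>I. lam i) < (\<Sum>i\<in>(\<Union>k\<in>I. nbrs E k). lam i)"
  obtains \<delta> where "0 < \<delta>"
    "\<And>I. independent_set n E I \<Longrightarrow> \<delta> \<le> (\<Sum>i\<in>(\<Union>k\<in>I. nbrs E k). lam i) - (\<Sum>i\<in>I. lam i)"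
proof -
  define margins where "margins = (\<lambda>I. (\<Sum>i\<in>(\<Union>k\<in>I. nbrs E k). lam i) - (\<Sum>i\<in>I. lam i)) ` {I. independent_set n E I}"
  have "{I. independent_set n E I} \<subseteq> Pow {1..n}" by (auto simp: independent_set_def)
  then have "finite margins"
    unfolding margins_def by (meson finite_Pow_iff finite_atLeastAtMost finite_imageI finite_subset)
  moreover have "\<forall>d\<in>margins. 0 < d" using assms by (auto simp: margins_def)
  ultimately have "0 < Min (insert 1 margins)" "\<forall>d\<in>margins. Min (insert 1 margins) \<le> d"
    by auto
  then show ?thesis using that[of "Min (insert 1 margins)"] by (auto simp: margins_def)
qed

context
  fixes n :: nat and E :: "nat set set"
  assumes n: "n \<ge> 1" and sg: "simple_graph n E"
begin

text \<open>The quadratic Lyapunov function \<open>\<Sum>k. x k ^ 2\<close> grows by \<open>1 + 2 x i\<close> when the arriving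
  item waits, which happens only if all its neighbours are empty, and by \<open>1 - 2 x j\<close> when it is
  matched with class \<open>j\<close>, in which case \<open>x i = 0\<close>.\<close>

lemma sum_squares_ml_counts:
  assumes x: "x \<in> admissible_counts n E" and i: "i \<in> {1..n}"
  shows "(\<Sum>k\<in>{1..n}. (real (ml_counts E x i k))\<^sup>2)
         = (\<Sum>k\<in>{1..n}. (real (x k))\<^sup>2) + 1 + 2 * real (x i) - 2 * real (longest_nbr_queue E x i)"
proof (cases rule: ml_counts_cases[OF n sg, of x i])
  case 1
  then have "longest_nbr_queue E x i = 0" by (simp add: longest_nbr_queue_eq_0_iff[OF n sg])
  then show ?thesis
    using 1 sum_comp_fun_upd[of "{1..n}" "\<lambda>a. (real a)\<^sup>2" x i "x i + 1"] i
    by (simp add: power2_eq_square algebra_simps)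
next
  case (2 j)
  have "{i, j} \<in> E" using 2(1) by (simp add: nbrs_def)
  then have "\<not> 1 \<le> x i" using admissible_counts_independent[OF x _ 2(2)] by blast
  then have "x i = 0" by simp
  then show ?thesis
    using 2 sum_comp_fun_upd[of "{1..n}" "\<lambda>a. (real a)\<^sup>2" x j "x j - 1"] simple_graph_nbrs(1)[OF sg]
    by (simp add: of_nat_diff power2_eq_square algebra_simps)
qed

lemma longest_nbr_queue_level_set:
  assumes "1 \<le> t"
  shows "{i\<in>{1..n}. t \<le> longest_nbr_queue E x i} = (\<Union>k\<in>{i\<in>{1..n}. t \<le> x i}. nbrs E k)"
proof (intro equalityI subsetI)
  fix i assume "i \<in> {i\<in>{1..n}. t \<le> longest_nbr_queue E x i}"
  then have i: "i \<in> {1..n}" "t \<le> longest_nbr_queue E x i" by auto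
  then have ne: "longest_nbr_queue E x i \<noteq> 0" using assms by auto
  with i longest_nbr[OF n sg ne] simple_graph_nbrs(1)[OF sg]
  have "longest_nbr E x i \<in> {i\<in>{1..n}. t \<le> x i}" "i \<in> nbrs E (longest_nbr E x i)"
    by (auto simp: nbrs_sym)
  then show "i \<in> (\<Union>k\<in>{i\<in>{1..n}. t \<le> x i}. nbrs E k)" by blast
next
  fix i assume "i \<in> (\<Union>k\<in>{i\<in>{1..n}. t \<le> x i}. nbrs E k)"
  then obtain k where k: "k \<in> {1..n}" "t \<le> x k" "i \<in> nbrs E k" by blast
  then have "x k \<le> longest_nbr_queue E x i" by (intro longest_nbr_queue_ge[OF n sg]) (simp add: nbrs_sym)
  then show "i \<in> {i\<in>{1..n}. t \<le> longest_nbr_queue E x i}" using k simple_graph_nbrs(1)[OF sg k(3)] by auto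
qed

text \<open>Counting by levels, the drift is the sum over \<open>t\<close> of \<open>\<lambda>(T t) - \<lambda>(V(T t))\<close> for the level sets
  \<open>T t = {i. t \<le> x i}\<close>, which are independent for admissible \<open>x\<close>.\<close>

lemma ml_drift_level_sets:
  fixes lam :: "nat \<Rightarrow> real"
  assumes x: "x \<in> admissible_counts n E"
    and margin: "\<And>I. independent_set n E I \<Longrightarrow> \<delta> \<le> (\<Sum>i\<in>(\<Union>k\<in>I. nbrs E k). lam i) - (\<Sum>i\<in>I. lam i)"
  shows "(\<Sum>i\<in>{1..n}. lam i * real (x i)) - (\<Sum>i\<in>{1..n}. lam i * real (longest_nbr_queue E x i))
         \<le> - \<delta> * real (Max (x ` {1..n}))"
proof -
  define K where "K = Max (x ` {1..n})"
  define T where "T t = {i\<in>{1..n}. t \<le> x i}" for t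
  have x_le: "x i \<le> K" if "i \<in> {1..n}" for i using that by (simp add: K_def)
  have lnq_le: "longest_nbr_queue E x i \<le> K" for i
    using Max_in[of "insert 0 (x ` nbrs E i)"] x_le simple_graph_nbrs(1)[OF sg]
    by (fastforce simp: longest_nbr_queue_def simple_graph_finite_nbrs[OF sg])
  have x_levels: "(\<Sum>i\<in>{1..n}. lam i * real (x i)) = (\<Sum>t\<in>{1..K}. \<Sum>i\<in>T t. lam i)"
    unfolding T_def by (rule sum_weighted_eq_sum_level_sets) (auto intro: x_le)
  have "(\<Sum>i\<in>{1..n}. lam i * real (longest_nbr_queue E x i))
      = (\<Sum>t\<in>{1..K}. \<Sum>i\<in>{i\<in>{1..n}. t \<le> longest_nbr_queue E x i}. lam i)"
    by (rule sum_weighted_eq_sum_level_sets) (auto intro: lnq_le)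
  also have "\<dots> = (\<Sum>t\<in>{1..K}. \<Sum>i\<in>(\<Union>k\<in>T t. nbrs E k). lam i)"
    unfolding T_def by (intro sum.cong refl arg_cong[where f="sum lam"] longest_nbr_queue_level_set) auto
  finally have lnq_levels: "(\<Sum>i\<in>{1..n}. lam i * real (longest_nbr_queue E x i))
      = (\<Sum>t\<in>{1..K}. \<Sum>i\<in>(\<Union>k\<in>T t. nbrs E k). lam i)" .
  have "(\<Sum>i\<in>{1..n}. lam i * real (x i)) - (\<Sum>i\<in>{1..n}. lam i * real (longest_nbr_queue E x i))
      = (\<Sum>t\<in>{1..K}. (\<Sum>i\<in>T t. lam i) - (\<Sum>i\<in>(\<Union>k\<in>T t. nbrs E k). lam i))"
    unfolding x_levels lnq_levels by (simp add: sum_subtractf)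
  also have "\<dots> \<le> (\<Sum>t\<in>{1..K}. - \<delta>)"
  proof (rule sum_mono)
    fix t assume t: "t \<in> {1..K}"
    have "K \<in> x ` {1..n}" unfolding K_def by (rule Max_in) (use n in auto)
    then have "independent_set n E (T t)"
      using t admissible_counts_independent[OF x] by (auto simp: independent_set_def T_def)
    then show "(\<Sum>i\<in>T t. lam i) - (\<Sum>i\<in>(\<Union>k\<in>T t. nbrs E k). lam i) \<le> - \<delta>" using margin by fastforce
  qed
  finally show ?thesis by (simp add: K_def mult.commute)
qed

end

definition ml_lyapunov :: "nat \<Rightarrow> nat set set \<Rightarrow> nat \<Rightarrow> real" where
  "ml_lyapunov n E s = (\<Sum>k\<in>{1..n}. (real (counts_of n E s k))\<^sup>2)"

lemma finite_bounded_counts: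
  assumes "n \<ge> 1" "simple_graph n E"
  shows "finite {s. \<forall>k\<in>{1..n}. counts_of n E s k \<le> K}"
proof -
  define G where "G = {x. \<forall>k. (k \<in> {1..n} \<longrightarrow> x k \<in> {0..K}) \<and> (k \<notin> {1..n} \<longrightarrow> x k = (0::nat))}"
  have "finite G" unfolding G_def by (rule finite_set_of_finite_funs) auto
  moreover have "inj (counts_of n E)"
    by (rule inj_on_inverseI[of _ "state_of n E"]) (simp add: state_of_counts_of[OF assms])
  ultimately have "finite (counts_of n E -` G)" by (rule finite_vimageI)
  moreover have "{s. \<forall>k\<in>{1..n}. counts_of n E s k \<le> K} \<subseteq> counts_of n E -` G"
    using counts_of_in by (auto simp: G_def admissible_counts_def)
  ultimately show ?thesis by (rule finite_subset[rotated])
qed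

context
  fixes n :: nat and E :: "nat set set" and lam :: "nat \<Rightarrow> real"
  assumes n: "n \<ge> 1" and sg: "simple_graph n E" and lam: "\<forall>i\<in>{1..n}. lam i > 0"
begin

lemma has_sum_policy_chain_ml:
  "((\<lambda>y. policy_chain n lam (ml_policy n E) s y * h y)
      has_sum (\<Sum>i\<in>{1..n}. lam i / (\<Sum>k\<in>{1..n}. lam k) * h (ml_next n E s i))) UNIV"
  unfolding policy_chain_ml[OF n sg lam]
  by (rule has_sum_weighted_kernels) (simp_all add: has_sum_of_bool_eq_mult)

lemma ml_lyapunov_drift:
  assumes margin: "\<And>I. independent_set n E I \<Longrightarrow> \<delta> \<le> (\<Sum>i\<in>(\<Union>k\<in>I. nbrs E k). lam i) - (\<Sum>i\<in>I. lam i)"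
  shows "(\<Sum>i\<in>{1..n}. lam i / (\<Sum>k\<in>{1..n}. lam k) * ml_lyapunov n E (ml_next n E s i))
         \<le> ml_lyapunov n E s + 1 - 2 * \<delta> / (\<Sum>k\<in>{1..n}. lam k) * real (Max (counts_of n E s ` {1..n}))"
proof -
  define L where "L = (\<Sum>k\<in>{1..n}. lam k)"
  define x where "x = counts_of n E s"
  have L: "0 < L" unfolding L_def using n lam by (intro sum_pos) auto
  define c where "c i = lam i / L" for i
  have c: "(\<Sum>i\<in>{1..n}. c i) = 1" using L by (simp add: c_def L_def sum_divide_distrib[symmetric])
  have V_next: "ml_lyapunov n E (ml_next n E s i)
      = ml_lyapunov n E s + 1 + 2 * real (x i) - 2 * real (longest_nbr_queue E x i)" if "i \<in> {1..n}" for i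
    using sum_squares_ml_counts[OF n sg counts_of_in that, of s]
    by (simp add: ml_lyapunov_def counts_of_ml_next[OF n sg that] x_def)
  have "(\<Sum>i\<in>{1..n}. lam i / L * ml_lyapunov n E (ml_next n E s i))
      = (\<Sum>i\<in>{1..n}. c i * (ml_lyapunov n E s + 1) + 2 * (c i * real (x i)) - 2 * (c i * real (longest_nbr_queue E x i)))"
    unfolding c_def[symmetric] by (intro sum.cong refl) (simp add: V_next algebra_simps)
  also have "\<dots> = ml_lyapunov n E s + 1
      + 2 / L * ((\<Sum>i\<in>{1..n}. lam i * real (x i)) - (\<Sum>i\<in>{1..n}. lam i * real (longest_nbr_queue E x i)))"
  proof -
    have "(\<Sum>i\<in>{1..n}. c i * (ml_lyapunov n E s + 1) + 2 * (c i * real (x i)) - 2 * (c i * real (longest_nbr_queue E x i)))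
        = ml_lyapunov n E s + 1 + 2 * (\<Sum>i\<in>{1..n}. c i * real (x i)) - 2 * (\<Sum>i\<in>{1..n}. c i * real (longest_nbr_queue E x i))"
      using c by (simp add: sum.distrib sum_subtractf sum_distrib_left[symmetric] sum_distrib_right[symmetric])
    then show ?thesis by (simp add: c_def sum_divide_distrib[symmetric] right_diff_distrib)
  qed
  also have "\<dots> \<le> ml_lyapunov n E s + 1 + 2 / L * (- \<delta> * real (Max (x ` {1..n})))"
    using mult_left_mono[OF ml_drift_level_sets[OF n sg counts_of_in margin, of s], of "2 / L"] L
    by (simp add: x_def)
  finally show ?thesis by (simp add: L_def x_def)
qed

lemma independent_set_strict_imp_ml_positive_recurrent:
  assumes surj: "surjective_graph n E"
    and strict: "\<forall>I. independent_set n E I \<longrightarrow> (\<Sum>i\<in>I. lam i) < (\<Sum>i\<in>(\<Union>k\<in>I. nbrs E k). lam i)"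
  shows "positive_recurrent (policy_chain n lam (ml_policy n E))"
proof -
  obtain \<delta> where \<delta>: "0 < \<delta>"
    and margin: "\<And>I. independent_set n E I \<Longrightarrow> \<delta> \<le> (\<Sum>i\<in>(\<Union>k\<in>I. nbrs E k). lam i) - (\<Sum>i\<in>I. lam i)"
    using exists_uniform_margin[OF strict] by blast
  define L where "L = (\<Sum>k\<in>{1..n}. lam k)"
  define K where "K = nat \<lceil>L / \<delta>\<rceil>"
  define PV where "PV s = (\<Sum>i\<in>{1..n}. lam i / L * ml_lyapunov n E (ml_next n E s i))" for s
  have L: "0 < L" unfolding L_def using n lam by (intro sum_pos) auto
  have drift: "PV s \<le> ml_lyapunov n E s + 1 - 2 * \<delta> / L * real (Max (counts_of n E s ` {1..n}))" for s
    using ml_lyapunov_drift[OF margin] by (simp add: PV_def L_def)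
  have outside: "PV s \<le> ml_lyapunov n E s - 1" if out: "s \<notin> {s. \<forall>k\<in>{1..n}. counts_of n E s k \<le> K}" for s
  proof -
    obtain k where k: "k \<in> {1..n}" "K < counts_of n E s k" using out by (auto simp: not_le)
    have "counts_of n E s k \<le> Max (counts_of n E s ` {1..n})" by (rule Max_ge) (use k in auto)
    with k have "K < Max (counts_of n E s ` {1..n})" by linarith
    then have "L / \<delta> \<le> real (Max (counts_of n E s ` {1..n}))"
      unfolding K_def by linarith
    then have "2 \<le> 2 * \<delta> / L * real (Max (counts_of n E s ` {1..n}))"
      using \<delta> L by (simp add: field_simps)
    then show ?thesis using drift[of s] by linarith
  qed
  have bounded: "PV s \<le> ml_lyapunov n E s + 1" for s
    using drift[of s] \<delta> L by (smt (verit) divide_nonneg_pos mult_nonneg_nonneg of_nat_0_le_iff)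
  have PV: "((\<lambda>y. policy_chain n lam (ml_policy n E) s y * ml_lyapunov n E y) has_sum PV s) UNIV" for s
    using has_sum_policy_chain_ml by (simp add: PV_def L_def)
  show ?thesis
    unfolding positive_recurrent_def
  proof
    fix s
    show "positive_recurrent_state (policy_chain n lam (ml_policy n E)) s"
      by (rule foster_criterion[OF stochastic_policy_chain[OF matching_policy_ml[OF n sg] n lam] _ PV
            finite_bounded_counts[OF n sg] outside bounded irreducible_ml[OF n sg lam surj]])
        (simp_all add: ml_lyapunov_def sum_nonneg)
  qed
qed

end

section \<open>The supply-demand theorem\<close>

definition transport_plan ::
  "('a \<times> 'b) set \<Rightarrow> 'a set \<Rightarrow> 'b set \<Rightarrow> ('a \<Rightarrow> real) \<Rightarrow> ('b \<Rightarrow> real) \<Rightarrow> ('a \<times> 'b \<Rightarrow> real) \<Rightarrow> bool" where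
  "transport_plan D A B s d f \<longleftrightarrow> (\<forall>p. f p \<noteq> 0 \<longrightarrow> p \<in> D) \<and> (\<forall>p. 0 \<le> f p) \<and>
     (\<forall>a\<in>A. (\<Sum>b\<in>B. f (a, b)) = s a) \<and> (\<forall>b\<in>B. (\<Sum>a\<in>A. f (a, b)) = d b)"

definition hall_condition :: "('a \<times> 'b) set \<Rightarrow> 'a set \<Rightarrow> ('a \<Rightarrow> real) \<Rightarrow> ('b \<Rightarrow> real) \<Rightarrow> bool" where
  "hall_condition D A s d \<longleftrightarrow> (\<forall>S\<subseteq>A. sum s S \<le> sum d (D `` S))"

lemma transport_planD:
  assumes "transport_plan D A B s d f"
  shows "f p \<noteq> 0 \<Longrightarrow> p \<in> D" "0 \<le> f p" "a \<in> A \<Longrightarrow> (\<Sum>b\<in>B. f (a, b)) = s a"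
    "b \<in> B \<Longrightarrow> (\<Sum>a\<in>A. f (a, b)) = d b"
  using assms unfolding transport_plan_def by blast+

lemma transport_plan_mono: "transport_plan D' A B s d f \<Longrightarrow> D' \<subseteq> D \<Longrightarrow> transport_plan D A B s d f"
  by (auto simp: transport_plan_def)

lemma transport_plan_add_edge:
  assumes f: "transport_plan D A B (s(u := s u - t)) (d(v := d v - t)) f"
    and uv: "(u, v) \<in> D" "u \<in> A" "v \<in> B" and t: "0 \<le> t" and fin: "finite A" "finite B"
  shows "transport_plan D A B s d (\<lambda>p. f p + (if p = (u, v) then t else 0))"
  unfolding transport_plan_def
proof (intro conjI allI impI ballI)
  fix p assume "f p + (if p = (u, v) then t else 0) \<noteq> 0"
  then show "p \<in> D" using uv transport_planD(1)[OF f, of p] by (cases "p = (u, v)") auto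
next
  fix p show "0 \<le> f p + (if p = (u, v) then t else 0)" using transport_planD(2)[OF f, of p] t by simp
next
  fix a assume "a \<in> A"
  have "(\<Sum>b\<in>B. f (a, b) + (if (a, b) = (u, v) then t else 0))
      = (\<Sum>b\<in>B. f (a, b)) + (\<Sum>b\<in>B. if b = v then (if a = u then t else 0) else 0)"
    by (simp only: sum.distrib[symmetric]) (rule sum.cong; auto)
  then show "(\<Sum>b\<in>B. f (a, b) + (if (a, b) = (u, v) then t else 0)) = s a"
    using transport_planD(3)[OF f \<open>a \<in> A\<close>] uv(3) fin(2) by (auto simp: sum.delta)
next
  fix b assume "b \<in> B"
  have "(\<Sum>a\<in>A. f (a, b) + (if (a, b) = (u, v) then t else 0))
      = (\<Sum>a\<in>A. f (a, b)) + (\<Sum>a\<in>A. if a = u then (if b = v then t else 0) else 0)"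
    by (simp only: sum.distrib[symmetric]) (rule sum.cong; auto)
  then show "(\<Sum>a\<in>A. f (a, b) + (if (a, b) = (u, v) then t else 0)) = d b"
    using transport_planD(4)[OF f \<open>b \<in> B\<close>] uv(2) fin(1) by (auto simp: sum.delta)
qed

lemma transport_plan_extend_sums:
  assumes f: "transport_plan D' A' B' s d f" and D': "D' \<subseteq> A' \<times> B'"
    and sub: "A' \<subseteq> A" "B' \<subseteq> B" and fin: "finite A" "finite B"
  shows "(\<Sum>b\<in>B. f (a, b)) = (if a \<in> A' then s a else 0)"
    and "(\<Sum>a\<in>A. f (a, b)) = (if b \<in> B' then d b else 0)"
proof -
  have zero: "f p = 0" if "p \<notin> A' \<times> B'" for p using transport_planD(1)[OF f, of p] D' that by blast
  have "(\<Sum>b\<in>B. f (a, b)) = (\<Sum>b\<in>B'. f (a, b))"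
    by (rule sum.mono_neutral_right) (use fin sub zero in auto)
  then show "(\<Sum>b\<in>B. f (a, b)) = (if a \<in> A' then s a else 0)"
    using transport_planD(3)[OF f, of a] zero by (auto intro: sum.neutral)
  have "(\<Sum>a\<in>A. f (a, b)) = (\<Sum>a\<in>A'. f (a, b))"
    by (rule sum.mono_neutral_right) (use fin sub zero in auto)
  then show "(\<Sum>a\<in>A. f (a, b)) = (if b \<in> B' then d b else 0)"
    using transport_planD(4)[OF f, of b] zero by (auto intro: sum.neutral)
qed

lemma transport_plan_union:
  assumes f1: "transport_plan D1 A1 B1 s d f1" and f2: "transport_plan D2 A2 B2 s d f2"
    and D: "D1 \<subseteq> A1 \<times> B1" "D2 \<subseteq> A2 \<times> B2" "D1 \<union> D2 \<subseteq> D"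
    and disj: "A1 \<inter> A2 = {}" "B1 \<inter> B2 = {}"
    and fin: "finite A1" "finite A2" "finite B1" "finite B2"
  shows "transport_plan D (A1 \<union> A2) (B1 \<union> B2) s d (\<lambda>p. f1 p + f2 p)"
proof -
  note sums1 = transport_plan_extend_sums[OF f1 D(1), of "A1 \<union> A2" "B1 \<union> B2"]
  note sums2 = transport_plan_extend_sums[OF f2 D(2), of "A1 \<union> A2" "B1 \<union> B2"]
  show ?thesis
    unfolding transport_plan_def
  proof (intro conjI allI impI ballI)
    fix p assume "f1 p + f2 p \<noteq> 0"
    then have "f1 p \<noteq> 0 \<or> f2 p \<noteq> 0" by auto
    then show "p \<in> D" using transport_planD(1)[OF f1, of p] transport_planD(1)[OF f2, of p] D by blast
  next
    fix p show "0 \<le> f1 p + f2 p" using transport_planD(2)[OF f1, of p] transport_planD(2)[OF f2, of p] by simp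
  next
    fix a assume "a \<in> A1 \<union> A2"
    then show "(\<Sum>b\<in>B1 \<union> B2. f1 (a, b) + f2 (a, b)) = s a"
      using sums1(1)[of a] sums2(1)[of a] disj fin by (auto simp: sum.distrib)
  next
    fix b assume "b \<in> B1 \<union> B2"
    then show "(\<Sum>a\<in>A1 \<union> A2. f1 (a, b) + f2 (a, b)) = d b"
      using sums1(2)[of b] sums2(2)[of b] disj fin by (auto simp: sum.distrib)
  qed
qed

lemma hall_conditionD: "hall_condition D A s d \<Longrightarrow> S \<subseteq> A \<Longrightarrow> sum s S \<le> sum d (D `` S)"
  by (simp add: hall_condition_def)

lemma hall_condition_reduce:
  assumes hall: "hall_condition D A s d" and uv: "(u, v) \<in> D" and D: "D \<subseteq> A \<times> B"
    and fin: "finite A" "finite B"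
    and slack: "\<And>S. S \<subseteq> A - {u} \<Longrightarrow> v \<in> D `` S \<Longrightarrow> t \<le> sum d (D `` S) - sum s S"
  shows "hall_condition D A (s(u := s u - t)) (d(v := d v - t))"
  unfolding hall_condition_def
proof (intro allI impI)
  fix S assume S: "S \<subseteq> A"
  then have fin': "finite S" "finite (D `` S)" using fin D by (auto intro: finite_subset)
  have "sum s S \<le> sum d (D `` S)" using hall S by (rule hall_conditionD)
  moreover have "v \<in> D `` S" if "u \<in> S" using that uv by auto
  moreover have "t \<le> sum d (D `` S) - sum s S" if "u \<notin> S" "v \<in> D `` S" using that S slack by blast
  ultimately show "sum (s(u := s u - t)) S \<le> sum (d(v := d v - t)) (D `` S)"
    unfolding sum_fun_upd_real[OF fin'(1)] sum_fun_upd_real[OF fin'(2)]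
    by (cases "u \<in> S"; cases "v \<in> D `` S") (simp_all del: Image_iff)
qed

lemma hall_condition_delete_source:
  assumes hall: "hall_condition D A s d" and "s u = 0"
    and D: "D \<subseteq> A \<times> B" and d: "\<forall>b\<in>B. 0 \<le> d b" and fin: "finite A" "finite B"
  shows "hall_condition {p\<in>D. fst p \<noteq> u} A s d"
  unfolding hall_condition_def
proof (intro allI impI)
  fix S assume S: "S \<subseteq> A"
  have "sum s S = sum s (S - {u})"
    using assms(2) S fin by (intro sum.mono_neutral_right) (auto intro: finite_subset)
  also have "\<dots> \<le> sum d (D `` (S - {u}))" using hall S by (auto intro: hall_conditionD)
  also have "\<dots> \<le> sum d ({p\<in>D. fst p \<noteq> u} `` S)"
    using D d fin by (intro sum_mono2) (auto intro: finite_subset)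
  finally show "sum s S \<le> sum d ({p\<in>D. fst p \<noteq> u} `` S)" .
qed

lemma hall_condition_delete_sink:
  assumes hall: "hall_condition D A s d" and "d v = 0" and D: "D \<subseteq> A \<times> B" and fin: "finite B"
  shows "hall_condition {p\<in>D. snd p \<noteq> v} A s d"
  unfolding hall_condition_def
proof (intro allI impI)
  fix S assume S: "S \<subseteq> A"
  have "sum s S \<le> sum d (D `` S)" using hall S by (simp add: hall_condition_def)
  also have "\<dots> = sum d ({p\<in>D. snd p \<noteq> v} `` S)"
    using assms(2) D fin by (intro sum.mono_neutral_right) (auto intro: finite_subset)
  finally show "sum s S \<le> sum d ({p\<in>D. snd p \<noteq> v} `` S)" .
qed

text \<open>A tight set \<open>S0\<close>, whose supply equals the demand of its neighbourhood, splits the problem: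
  \<open>S0\<close> must be served by \<open>D `` S0\<close> alone, and the rest by the rest.\<close>

lemma hall_condition_tight_split:
  assumes hall: "hall_condition D A s d" and tight: "sum s S0 = sum d (D `` S0)"
    and S0: "S0 \<subseteq> A" and D: "D \<subseteq> A \<times> B" and fin: "finite A" "finite B"
  shows "hall_condition (D \<inter> S0 \<times> D `` S0) S0 s d"
    and "hall_condition (D \<inter> (A - S0) \<times> (B - D `` S0)) (A - S0) s d"
proof -
  show "hall_condition (D \<inter> S0 \<times> D `` S0) S0 s d"
    unfolding hall_condition_def
  proof (intro allI impI)
    fix S assume S: "S \<subseteq> S0"
    then have "(D \<inter> S0 \<times> D `` S0) `` S = D `` S" by auto
    then show "sum s S \<le> sum d ((D \<inter> S0 \<times> D `` S0) `` S)"
      using hall S S0 by (auto simp: hall_condition_def)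
  qed
  show "hall_condition (D \<inter> (A - S0) \<times> (B - D `` S0)) (A - S0) s d"
    unfolding hall_condition_def
  proof (intro allI impI)
    fix S assume S: "S \<subseteq> A - S0"
    have fin': "finite S" "finite S0" "finite (D `` S)" "finite (D `` S0)"
      using S S0 D fin by (auto intro: finite_subset)
    have "sum s S + sum s S0 = sum s (S \<union> S0)"
      using S fin' by (intro sum.union_disjoint[symmetric]) auto
    also have "\<dots> \<le> sum d (D `` (S \<union> S0))"
      using hall S S0 by (auto intro: hall_conditionD)
    also have "D `` (S \<union> S0) = (D `` S - D `` S0) \<union> D `` S0" by auto
    also have "sum d \<dots> = sum d (D `` S - D `` S0) + sum d (D `` S0)"
      using fin' by (intro sum.union_disjoint) auto
    also have "D `` S - D `` S0 = (D \<inter> (A - S0) \<times> (B - D `` S0)) `` S"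
      using S D by auto
    finally show "sum s S \<le> sum d ((D \<inter> (A - S0) \<times> (B - D `` S0)) `` S)"
      using tight by simp
  qed
qed

lemma subset_not_mem_psubset: "D' \<subseteq> D \<Longrightarrow> p \<in> D \<Longrightarrow> p \<notin> D' \<Longrightarrow> D' \<subset> D"
  by auto

lemma transport_plan_no_pairs:
  assumes "hall_condition {} A s d" "finite A" "finite B"
    "\<forall>a\<in>A. 0 \<le> s a" "\<forall>b\<in>B. 0 \<le> d b" "sum s A = sum d B"
  shows "transport_plan {} A B s d (\<lambda>_. 0)"
proof -
  have "sum s A \<le> 0" using hall_conditionD[OF assms(1), of A] by simp
  then have "\<forall>a\<in>A. s a = 0" "\<forall>b\<in>B. d b = 0"
    using assms(4-6) sum_nonneg_eq_0_iff[OF assms(2), of s] sum_nonneg_eq_0_iff[OF assms(3), of d]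
      sum_nonneg[of A s] by auto
  then show ?thesis by (simp add: transport_plan_def)
qed

text \<open>The largest amount that can be shipped along \<open>(u, v)\<close> without violating Hall's condition:
  afterwards \<open>u\<close> is exhausted, \<open>v\<close> is satisfied, or some set of suppliers avoiding \<open>u\<close> but
  reaching \<open>v\<close> has become tight.\<close>

lemma exists_hall_preserving_shipment:
  assumes hall: "hall_condition D A s d" and uv: "(u, v) \<in> D" and D: "D \<subseteq> A \<times> B"
    and fin: "finite A" "finite B" and nonneg: "\<forall>a\<in>A. 0 \<le> s a" "\<forall>b\<in>B. 0 \<le> d b"
  obtains t where "0 \<le> t" "t \<le> s u" "t \<le> d v" "hall_condition D A (s(u := s u - t)) (d(v := d v - t))"
    "t = s u \<or> t = d v \<or> (\<exists>S0. S0 \<subseteq> A \<and> u \<notin> S0 \<and> v \<in> D `` S0 \<and> t = sum d (D `` S0) - sum s S0)"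
proof -
  define slack where "slack S = sum d (D `` S) - sum s S" for S
  define Fam where "Fam = {S. S \<subseteq> A - {u} \<and> v \<in> D `` S}"
  define M where "M = insert (s u) (insert (d v) (slack ` Fam))"
  have "finite Fam" using fin(1) by (auto simp: Fam_def intro: finite_subset[of _ "Pow A"])
  then have "finite M" by (simp add: M_def)
  then have "Min M \<le> m" if "m \<in> M" for m using that by (rule Min_le)
  then have le: "Min M \<le> s u" "Min M \<le> d v" "\<And>S. S \<in> Fam \<Longrightarrow> Min M \<le> slack S" by (auto simp: M_def)
  have "Min M \<in> M" by (rule Min_in[OF \<open>finite M\<close>]) (simp add: M_def)
  then have cases: "Min M = s u \<or> Min M = d v \<or> (\<exists>S\<in>Fam. Min M = slack S)" by (auto simp: M_def)
  have "0 \<le> slack S" if "S \<in> Fam" for S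
    using that hall_conditionD[OF hall] by (auto simp: slack_def Fam_def)
  then have "0 \<le> Min M" using cases nonneg uv D by auto
  moreover have "hall_condition D A (s(u := s u - Min M)) (d(v := d v - Min M))"
    by (rule hall_condition_reduce[OF hall uv D fin]) (use le in \<open>auto simp: Fam_def slack_def\<close>)
  ultimately show ?thesis
    using that[of "Min M"] le cases by (auto simp: Fam_def slack_def)
qed

lemma transport_plan_exists_tight_split:
  assumes smaller: "\<And>D' A' B'. D' \<subset> D \<Longrightarrow> A' \<subseteq> A \<Longrightarrow> B' \<subseteq> B \<Longrightarrow> D' \<subseteq> A' \<times> B' \<Longrightarrow>
      sum s A' = sum d B' \<Longrightarrow> hall_condition D' A' s d \<Longrightarrow> \<exists>f. transport_plan D' A' B' s d f"
    and hall: "hall_condition D A s d" and balance: "sum s A = sum d B"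
    and D: "D \<subseteq> A \<times> B" and fin: "finite A" "finite B"
    and S0: "S0 \<subseteq> A" "u \<notin> S0" "v \<in> D `` S0" "(u, v) \<in> D" and tight: "sum s S0 = sum d (D `` S0)"
  shows "\<exists>f. transport_plan D A B s d f"
proof -
  note split = hall_condition_tight_split[OF hall tight S0(1) D fin]
  have "sum s (A - S0) = sum d (B - D `` S0)"
    using balance tight S0(1) D fin by (simp add: sum_diff Image_subset)
  moreover obtain a0 where "a0 \<in> S0" "(a0, v) \<in> D" using S0(3) by auto
  then have "D \<inter> (A - S0) \<times> (B - D `` S0) \<subset> D" by (intro subset_not_mem_psubset) auto
  ultimately obtain f2 where f2: "transport_plan (D \<inter> (A - S0) \<times> (B - D `` S0)) (A - S0) (B - D `` S0) s d f2"
    using smaller[OF _ Diff_subset Diff_subset Int_lower2 _ split(2)] by blast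
  have "D \<inter> S0 \<times> D `` S0 \<subset> D" using S0(2,4) by (intro subset_not_mem_psubset) auto
  then obtain f1 where f1: "transport_plan (D \<inter> S0 \<times> D `` S0) S0 (D `` S0) s d f1"
    using smaller[OF _ S0(1) _ Int_lower2 tight split(1)] D by blast
  have "transport_plan D (S0 \<union> (A - S0)) (D `` S0 \<union> (B - D `` S0)) s d (\<lambda>p. f1 p + f2 p)"
    by (rule transport_plan_union[OF f1 f2]) (use S0 D fin in \<open>auto intro: finite_subset\<close>)
  moreover have "S0 \<union> (A - S0) = A" "D `` S0 \<union> (B - D `` S0) = B" using S0 D by auto
  ultimately show ?thesis by auto
qed

text \<open>The supply-demand theorem (Gale), by induction on the number of admissible pairs: after
  the largest admissible shipment along one pair, each of the three outcomes yields subproblems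
  with fewer pairs.\<close>

theorem transport_plan_exists:
  assumes "finite D" "finite A" "finite B" "D \<subseteq> A \<times> B"
    "\<forall>a\<in>A. 0 \<le> s a" "\<forall>b\<in>B. 0 \<le> d b" "sum s A = sum d B" "hall_condition D A s d"
  shows "\<exists>f. transport_plan D A B s d f"
  using assms
proof (induction "card D" arbitrary: D A B s d rule: less_induct)
  case less
  note fin = less.prems(1-3) and D = less.prems(4) and nonneg = less.prems(5,6)
    and balance = less.prems(7) and hall = less.prems(8)
  show ?case
  proof (cases "D = {}")
    case True
    then show ?thesis using transport_plan_no_pairs fin nonneg balance hall by blast
  next
    case False
    then obtain u v where uv: "(u, v) \<in> D" by auto
    then have u: "u \<in> A" and v: "v \<in> B" using D by auto
    obtain t where t: "0 \<le> t" "t \<le> s u" "t \<le> d v"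
      and hall': "hall_condition D A (s(u := s u - t)) (d(v := d v - t))"
      and cases: "t = s u \<or> t = d v \<or> (\<exists>S0. S0 \<subseteq> A \<and> u \<notin> S0 \<and> v \<in> D `` S0 \<and> t = sum d (D `` S0) - sum s S0)"
      using exists_hall_preserving_shipment[OF hall uv D fin(2,3) nonneg] by blast
    define s' where "s' = s(u := s u - t)"
    define d' where "d' = d(v := d v - t)"
    have nonneg': "\<forall>a\<in>A. 0 \<le> s' a" "\<forall>b\<in>B. 0 \<le> d' b"
      using nonneg t by (auto simp: s'_def d'_def)
    have balance': "sum s' A = sum d' B"
      using balance u v unfolding s'_def d'_def sum_fun_upd_real[OF fin(2)] sum_fun_upd_real[OF fin(3)]
      by simp
    have recurse: "\<exists>f. transport_plan D' A' B' s' d' f"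
      if smaller: "D' \<subset> D" "A' \<subseteq> A" "B' \<subseteq> B" "D' \<subseteq> A' \<times> B'" "sum s' A' = sum d' B'"
        "hall_condition D' A' s' d'" for D' A' B'
    proof -
      have "finite D'" "finite A'" "finite B'" using smaller(1-3) fin by (auto intro: finite_subset)
      moreover have "\<forall>a\<in>A'. 0 \<le> s' a" "\<forall>b\<in>B'. 0 \<le> d' b" using smaller(2,3) nonneg' by auto
      ultimately show ?thesis
        using less.hyps[OF psubset_card_mono[OF fin(1) smaller(1)]] smaller(4-6) by presburger
    qed
    have drop_pairs: "\<exists>f. transport_plan D A B s' d' f"
      if D': "D' \<subseteq> D" "(u, v) \<notin> D'" "hall_condition D' A s' d'" for D'
    proof -
      have smaller: "D' \<subset> D" using D'(1) uv D'(2) by (rule subset_not_mem_psubset)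
      then obtain f where "transport_plan D' A B s' d' f"
        using recurse[OF smaller order_refl order_refl _ balance' D'(3)] D'(1) D by blast
      then show ?thesis using transport_plan_mono[OF _ D'(1)] by blast
    qed
    have "\<exists>f. transport_plan D A B s' d' f"
      using cases
    proof (elim disjE exE conjE)
      assume "t = s u"
      then show ?thesis
        using hall_condition_delete_source[OF hall'[folded s'_def d'_def] _ D nonneg'(2) fin(2,3)]
        by (intro drop_pairs[of "{p\<in>D. fst p \<noteq> u}"]) (auto simp: s'_def)
    next
      assume "t = d v"
      then show ?thesis
        using hall_condition_delete_sink[OF hall'[folded s'_def d'_def] _ D fin(3)]
        by (intro drop_pairs[of "{p\<in>D. snd p \<noteq> v}"]) (auto simp: d'_def)
    next
      fix S0 assume S0: "S0 \<subseteq> A" "u \<notin> S0" "v \<in> D `` S0" and t_eq: "t = sum d (D `` S0) - sum s S0"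
      have fin': "finite S0" "finite (D `` S0)" using S0 D fin by (auto intro: finite_subset)
      have "sum s' S0 = sum d' (D `` S0)"
        using S0 t_eq unfolding s'_def d'_def sum_fun_upd_real[OF fin'(1)] sum_fun_upd_real[OF fin'(2)]
        by simp
      with recurse show ?thesis
        by (rule transport_plan_exists_tight_split[OF _ hall'[folded s'_def d'_def] balance' D fin(2,3) S0 uv])
    qed
    then show ?thesis
      using transport_plan_add_edge[OF _ uv u v t(1) fin(2,3)] unfolding s'_def d'_def by blast
  qed
qed

section \<open>Edge rates\<close>

text \<open>Hall's condition for the neighbourhood relation follows from its restriction to independent
  sets: the part \<open>I = S - V(S)\<close> of \<open>S\<close> outside its own neighbourhood is independent, and \<open>V(I)\<close>
  is disjoint from \<open>S\<close>.\<close>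

lemma nbrs_weight_ge_if_independent_sets:
  fixes w :: "nat \<Rightarrow> real"
  assumes sg: "simple_graph n E" and w: "\<forall>i\<in>{1..n}. 0 \<le> w i"
    and indep: "\<And>I. independent_set n E I \<Longrightarrow> sum w I \<le> sum w (\<Union>k\<in>I. nbrs E k)"
    and S: "S \<subseteq> {1..n}"
  shows "sum w S \<le> sum w (\<Union>k\<in>S. nbrs E k)"
proof -
  define V where "V X = (\<Union>k\<in>X. nbrs E k)" for X
  define I where "I = S - V S"
  have V: "V X \<subseteq> {1..n}" for X using simple_graph_nbrs(1)[OF sg] by (auto simp: V_def)
  then have fin: "finite S" "finite (V X)" for X using S by (auto intro: finite_subset)
  have w_V: "b \<in> V X \<Longrightarrow> 0 \<le> w b" for b X using w V by blast
  have "sum w S = sum w I + sum w (S \<inter> V S)"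
    using fin by (subst sum.union_disjoint[symmetric]) (auto simp: I_def intro: sum.cong)
  also have "\<dots> \<le> sum w (V I) + sum w (S \<inter> V S)"
  proof (cases "I = {}")
    case False
    then have "independent_set n E I"
      using S by (auto simp: independent_set_def I_def V_def nbrs_def)
    then have "sum w I \<le> sum w (V I)" unfolding V_def by (rule indep)
    then show ?thesis by linarith
  qed (simp add: V_def)
  also have "\<dots> = sum w (V I \<union> (S \<inter> V S))"
    using fin by (intro sum.union_disjoint[symmetric]) (auto simp: I_def V_def nbrs_sym)
  also have "\<dots> \<le> sum w (V S)"
    using fin w_V by (intro sum_mono2) (auto simp: I_def V_def)
  finally show ?thesis by (simp add: V_def)
qed

lemma sum_incidence_single_edge:
  assumes sg: "simple_graph n E" and ij: "{i, j} \<in> E"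
  shows "(\<Sum>e\<in>E. incidence k e * (of_bool (e = {i, j}) * c)) = of_bool (i = k) * c + of_bool (j = k) * c"
proof -
  have "i \<noteq> j" using ij simple_graph_no_loop[OF sg, of i] by auto
  have "(\<Sum>e\<in>E. incidence k e * (of_bool (e = {i, j}) * c)) = (\<Sum>e\<in>E. if e = {i, j} then incidence k {i, j} * c else 0)"
    by (intro sum.cong) auto
  also have "\<dots> = incidence k {i, j} * c"
    using ij simple_graph_finite[OF sg] by (simp add: sum.delta)
  finally show ?thesis using \<open>i \<noteq> j\<close> by (auto simp: incidence_def)
qed

text \<open>Symmetrising a transport plan that ships \<open>w\<close> to \<open>w\<close> along ordered pairs of adjacent
  vertices gives edge rates: each vertex \<open>k\<close> receives half of what it sends plus half of what
  it gets.\<close>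

lemma edge_rates_of_transport_plan:
  assumes sg: "simple_graph n E"
    and f: "transport_plan {(i, j). {i, j} \<in> E} {1..n} {1..n} w w f"
  defines "\<mu> e \<equiv> (\<Sum>i\<in>{1..n}. \<Sum>j\<in>{1..n}. of_bool (e = {i, j}) * f (i, j)) / 2"
  shows "0 \<le> \<mu> e" and "k \<in> {1..n} \<Longrightarrow> (\<Sum>e\<in>E. incidence k e * \<mu> e) = w k"
proof -
  show "0 \<le> \<mu> e" using transport_planD(2)[OF f] by (simp add: \<mu>_def sum_nonneg)
  assume k: "k \<in> {1..n}"
  have pair: "(\<Sum>e\<in>E. incidence k e * (of_bool (e = {i, j}) * f (i, j)))
      = of_bool (i = k) * f (i, j) + of_bool (j = k) * f (i, j)" for i j
  proof (cases "f (i, j) = 0")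
    case False
    then have "{i, j} \<in> E" using transport_planD(1)[OF f] by auto
    then show ?thesis by (rule sum_incidence_single_edge[OF sg])
  qed simp
  have "(\<Sum>e\<in>E. incidence k e * \<mu> e)
      = (\<Sum>e\<in>E. \<Sum>i\<in>{1..n}. \<Sum>j\<in>{1..n}. incidence k e * (of_bool (e = {i, j}) * f (i, j))) / 2"
    unfolding \<mu>_def times_divide_eq_right sum_divide_distrib[symmetric] sum_distrib_left ..
  also have "\<dots> = (\<Sum>i\<in>{1..n}. \<Sum>j\<in>{1..n}. \<Sum>e\<in>E. incidence k e * (of_bool (e = {i, j}) * f (i, j))) / 2"
    by (subst sum.swap) (simp only: sum.swap[of _ E])
  also have "\<dots> = ((\<Sum>i\<in>{1..n}. \<Sum>j\<in>{1..n}. of_bool (i = k) * f (i, j))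
      + (\<Sum>i\<in>{1..n}. \<Sum>j\<in>{1..n}. of_bool (j = k) * f (i, j))) / 2"
    by (simp only: pair sum.distrib)
  also have "(\<Sum>i\<in>{1..n}. \<Sum>j\<in>{1..n}. of_bool (i = k) * f (i, j)) = (\<Sum>j\<in>{1..n}. f (k, j))"
  proof -
    have "(\<Sum>i\<in>{1..n}. \<Sum>j\<in>{1..n}. of_bool (i = k) * f (i, j))
        = (\<Sum>i\<in>{1..n}. if i = k then (\<Sum>j\<in>{1..n}. f (i, j)) else 0)"
      by (intro sum.cong) auto
    then show ?thesis using k by (simp add: sum.delta)
  qed
  also have "(\<Sum>i\<in>{1..n}. \<Sum>j\<in>{1..n}. of_bool (j = k) * f (i, j)) = (\<Sum>i\<in>{1..n}. f (i, k))"
  proof -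
    have "(\<Sum>i\<in>{1..n}. \<Sum>j\<in>{1..n}. of_bool (j = k) * f (i, j))
        = (\<Sum>i\<in>{1..n}. \<Sum>j\<in>{1..n}. if j = k then f (i, j) else 0)"
      by (intro sum.cong) auto
    then show ?thesis using k by (simp add: sum.delta)
  qed
  also have "((\<Sum>j\<in>{1..n}. f (k, j)) + (\<Sum>i\<in>{1..n}. f (i, k))) / 2 = w k"
    using transport_planD(3)[OF f k] transport_planD(4)[OF f k] by simp
  finally show "(\<Sum>e\<in>E. incidence k e * \<mu> e) = w k" .
qed

lemma exists_degree_perturbation:
  fixes lam :: "nat \<Rightarrow> real"
  assumes n: "n \<ge> 1" and sg: "simple_graph n E" and lam: "\<forall>i\<in>{1..n}. lam i > 0"
    and strict: "\<forall>I. independent_set n E I \<longrightarrow> (\<Sum>i\<in>I. lam i) < (\<Sum>i\<in>(\<Union>k\<in>I. nbrs E k). lam i)"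
  defines "deg k \<equiv> \<Sum>e\<in>E. incidence k e"
  obtains \<epsilon> where "0 < \<epsilon>" "\<forall>k\<in>{1..n}. 0 \<le> lam k - \<epsilon> * deg k"
    "\<And>I. independent_set n E I \<Longrightarrow>
       (\<Sum>k\<in>I. lam k - \<epsilon> * deg k) \<le> (\<Sum>k\<in>(\<Union>i\<in>I. nbrs E i). lam k - \<epsilon> * deg k)"
proof -
  obtain \<delta> where \<delta>: "0 < \<delta>"
    and margin: "\<And>I. independent_set n E I \<Longrightarrow> \<delta> \<le> (\<Sum>i\<in>(\<Union>k\<in>I. nbrs E k). lam i) - (\<Sum>i\<in>I. lam i)"
    using exists_uniform_margin[OF strict] by blast
  define total where "total = (\<Sum>k\<in>{1..n}. deg k)"
  define m where "m = Min (lam ` {1..n})"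
  define \<epsilon> where "\<epsilon> = min \<delta> m / (total + 1)"
  have deg_nonneg: "0 \<le> deg k" for k by (simp add: deg_def incidence_def sum_nonneg)
  have deg_le: "sum deg X \<le> total" if "X \<subseteq> {1..n}" for X
    unfolding total_def using that deg_nonneg by (intro sum_mono2) auto
  have "m \<in> lam ` {1..n}" unfolding m_def by (rule Min_in) (use n in auto)
  then have m: "0 < m" "\<And>k. k \<in> {1..n} \<Longrightarrow> m \<le> lam k" using lam by (auto simp: m_def)
  have "0 \<le> total" unfolding total_def by (simp add: sum_nonneg deg_nonneg)
  have "\<epsilon> * total = min \<delta> m * (total / (total + 1))" by (simp add: \<epsilon>_def)
  also have "\<dots> \<le> min \<delta> m"
    by (rule mult_left_le) (use \<open>0 \<le> total\<close> \<delta> m(1) in simp_all)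
  finally have \<epsilon>_total: "\<epsilon> * total \<le> min \<delta> m" .
  have \<epsilon>_pos: "0 < \<epsilon>" unfolding \<epsilon>_def using \<open>0 \<le> total\<close> \<delta> m(1) by simp
  show ?thesis
  proof (rule that[OF \<epsilon>_pos])
    show "\<forall>k\<in>{1..n}. 0 \<le> lam k - \<epsilon> * deg k"
    proof
      fix k assume k: "k \<in> {1..n}"
      have "\<epsilon> * deg k \<le> \<epsilon> * total" using deg_le[of "{k}"] k \<epsilon>_pos by (intro mult_left_mono) auto
      then show "0 \<le> lam k - \<epsilon> * deg k" using \<epsilon>_total m(2)[OF k] min.cobounded2[of \<delta> m] by linarith
    qed
  next
    fix I assume I: "independent_set n E I"
    have "(\<Union>k\<in>I. nbrs E k) \<subseteq> {1..n}" using simple_graph_nbrs(1)[OF sg] by auto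
    then have "\<epsilon> * sum deg (\<Union>k\<in>I. nbrs E k) \<le> \<epsilon> * total" using \<epsilon>_pos deg_le by (intro mult_left_mono) auto
    moreover have "0 \<le> \<epsilon> * sum deg I"
      using \<epsilon>_pos deg_nonneg by (intro mult_nonneg_nonneg sum_nonneg) auto
    ultimately show "(\<Sum>k\<in>I. lam k - \<epsilon> * deg k) \<le> (\<Sum>k\<in>(\<Union>i\<in>I. nbrs E i). lam k - \<epsilon> * deg k)"
      using margin[OF I] \<epsilon>_total min.cobounded1[of \<delta> m]
      by (simp add: sum_subtractf sum_distrib_left[symmetric])
  qed
qed

text \<open>Reserve the rate \<open>\<epsilon>\<close> on every edge: the remaining vertex rates \<open>\<lambda> k - \<epsilon> deg k\<close> still
  satisfy Hall's condition for the neighbourhood relation, a transport plan for them symmetrises to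
  nonnegative edge rates, and adding \<open>\<epsilon>\<close> back makes every edge rate positive.\<close>

lemma independent_set_strict_imp_edge_rates:
  fixes lam :: "nat \<Rightarrow> real"
  assumes n: "n \<ge> 1" and sg: "simple_graph n E" and lam: "\<forall>i\<in>{1..n}. lam i > 0"
    and strict: "\<forall>I. independent_set n E I \<longrightarrow> (\<Sum>i\<in>I. lam i) < (\<Sum>i\<in>(\<Union>k\<in>I. nbrs E k). lam i)"
  shows "\<exists>\<mu>. (\<forall>e\<in>E. \<mu> e > 0) \<and> (\<forall>i\<in>{1..n}. (\<Sum>e\<in>E. incidence i e * \<mu> e) = lam i)"
proof -
  define deg where "deg k = (\<Sum>e\<in>E. incidence k e)" for k
  obtain \<epsilon> where \<epsilon>: "0 < \<epsilon>" and w: "\<forall>k\<in>{1..n}. 0 \<le> lam k - \<epsilon> * deg k"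
    and indep: "\<And>I. independent_set n E I \<Longrightarrow>
       (\<Sum>k\<in>I. lam k - \<epsilon> * deg k) \<le> (\<Sum>k\<in>(\<Union>i\<in>I. nbrs E i). lam k - \<epsilon> * deg k)"
    using exists_degree_perturbation[OF assms] unfolding deg_def by blast
  define D where "D = {(i, j). {i, j} \<in> E}"
  have D: "D \<subseteq> {1..n} \<times> {1..n}"
    using sg by (auto simp: D_def simple_graph_def doubleton_eq_iff)
  have "D `` S = (\<Union>k\<in>S. nbrs E k)" for S by (auto simp: D_def nbrs_def)
  then have hall: "hall_condition D {1..n} (\<lambda>k. lam k - \<epsilon> * deg k) (\<lambda>k. lam k - \<epsilon> * deg k)"
    unfolding hall_condition_def using nbrs_weight_ge_if_independent_sets[OF sg w indep] by simp
  have "finite D" using D by (rule finite_subset) simp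
  from transport_plan_exists[OF this finite_atLeastAtMost finite_atLeastAtMost D w w refl hall]
  obtain f where f: "transport_plan D {1..n} {1..n} (\<lambda>k. lam k - \<epsilon> * deg k) (\<lambda>k. lam k - \<epsilon> * deg k) f" ..
  define \<mu> where "\<mu> e = (\<Sum>i\<in>{1..n}. \<Sum>j\<in>{1..n}. of_bool (e = {i, j}) * f (i, j)) / 2" for e
  note rates = edge_rates_of_transport_plan[OF sg f[unfolded D_def], folded \<mu>_def]
  show ?thesis
  proof (intro exI conjI ballI)
    fix e show "0 < \<mu> e + \<epsilon>" using rates(1)[of e] \<epsilon> by linarith
  next
    fix k assume k: "k \<in> {1..n}"
    have "(\<Sum>e\<in>E. incidence k e * (\<mu> e + \<epsilon>)) = (\<Sum>e\<in>E. incidence k e * \<mu> e) + deg k * \<epsilon>"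
      by (simp add: distrib_left sum.distrib deg_def sum_distrib_right)
    then show "(\<Sum>e\<in>E. incidence k e * (\<mu> e + \<epsilon>)) = lam k" using rates(2)[OF k] by simp
  qed
qed

theorem proposition3p7:
  fixes n :: nat and E :: "nat set set" and lam :: "nat \<Rightarrow> real"
  assumes "n \<ge> 1"
    and "simple_graph n E"
    and "surjective_graph n E"
    and "\<forall>i\<in>{1..n}. lam i > 0"
  shows "(stabilizable n E lam \<longleftrightarrow>
            (\<forall>I. independent_set n E I \<longrightarrow>
               (\<Sum>i\<in>I. lam i) < (\<Sum>i\<in>(\<Union>k\<in>I. nbrs E k). lam i)))
       \<and> ((\<forall>I. independent_set n E I \<longrightarrow>
               (\<Sum>i\<in>I. lam i) < (\<Sum>i\<in>(\<Union>k\<in>I. nbrs E k). lam i)) \<longleftrightarrow>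
            (\<exists>\<mu> :: nat set \<Rightarrow> real. (\<forall>e\<in>E. \<mu> e > 0) \<and>
               (\<forall>i\<in>{1..n}. (\<Sum>e\<in>E. incidence i e * \<mu> e) = lam i)))"
proof -
  note n = assms(1) and sg = assms(2) and surj = assms(3) and lam = assms(4)
  let ?strict = "\<forall>I. independent_set n E I \<longrightarrow> (\<Sum>i\<in>I. lam i) < (\<Sum>i\<in>(\<Union>k\<in>I. nbrs E k). lam i)"
  have "stabilizable n E lam \<longleftrightarrow> ?strict"
  proof
    assume "stabilizable n E lam"
    then obtain sz s0 Phi where "matching_policy n E sz s0 Phi" "positive_recurrent (policy_chain n lam Phi)"
      unfolding stabilizable_def by blast
    then show ?strict using positive_recurrent_imp_independent_set_strict[OF n sg lam] by blast
  next
    assume ?strict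
    then show "stabilizable n E lam"
      unfolding stabilizable_def
      using matching_policy_ml[OF n sg] irreducible_ml[OF n sg lam surj]
        independent_set_strict_imp_ml_positive_recurrent[OF n sg lam surj] by blast
  qed
  moreover have "?strict \<longleftrightarrow> (\<exists>\<mu> :: nat set \<Rightarrow> real. (\<forall>e\<in>E. \<mu> e > 0) \<and>
      (\<forall>i\<in>{1..n}. (\<Sum>e\<in>E. incidence i e * \<mu> e) = lam i))"
    using independent_set_strict_imp_edge_rates[OF n sg lam] independent_set_strict_if_edge_rates[OF sg surj]
    by blast
  ultimately show ?thesis by blast
qed

end
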